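(* Let $q\ge2$, $N=2^q$, $b>0$, $h=b/N$, and let $A_q=h^2B_h$, where $B_h=(b_{i,j})_{i,j=1}^{N-1}$ is the symmetric Toeplitz matrix with $b_{i,i}=\frac{2N}3-1$, $b_{i,j}=\frac N6-1$ if $|i-j|=1$, and $b_{i,j}=-1$ if $|i-j|\ge2$. For $k=q,q-1,\dots,2$ define $A_{k-1}=I_k^{k-1}A_kI_{k-1}^k$, where $A_k$ has size $n_k=2^k-1$, $I_k^{k-1}:\mathbb R^{n_k}\to\mathbb R^{n_{k-1}}$ is $(I_k^{k-1}\nu)_i=\frac14(\nu_{2i-1}+2\nu_{2i}+\nu_{2i+1})$ and $I_{k-1}^k=2(I_k^{k-1})^T$. Let $D_k$ be the diagonal of $A_k$, let $\eta_0$ satisfy $\lambda_{\max}(D_k^{-1}A_k)\le\eta_0<3$ for all $1\le k\le q$, let $0<\omega<2/\eta_0$, let $0<\eta\le\omega(2-\omega\eta_0)$, and let $K_k=I-\omega D_k^{-1}A_k$. Then for every $1\le k\le q$, $\|K_k\nu\|_{A_k}^2\le\|\nu\|_{A_k}^2-\eta\|A_k\nu\|_{D_k^{-1}}^2$ for all $\nu\in\mathbb R^{n_k}$, and for every $2\le k\le q$, $$\|K_kT^k\|_{A_k}\le\sqrt{1-\eta/4}<1,\qquad T^k=I-I_{k-1}^kA_{k-1}^{-1}I_k^{k-1}A_k.$$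
   Context: For a symmetric positive definite $M$, $\|\nu\|_M=\sqrt{\nu^TM\nu}$ and for a matrix $X$, $\|X\|_M$ is the induced operator norm. $K_k$ is the damped Jacobi iteration matrix on level $k$, $T^k$ the coarse grid correction operator between levels $k$ and $k-1$ (Galerkin coarse matrices), and $K_kT^k$ the two-level iteration matrix at level $k$ of the multigrid hierarchy. $A_q$ is the piecewise linear finite element stiffness matrix of the nonlocal operator $u\mapsto\int_0^b[u(x)-u(y)]dy$ with zero exterior condition. *)

theory Defs
  imports "Jordan_Normal_Form.Matrix" "Jordan_Normal_Form.Char_Poly"
    "Jordan_Normal_Form.Gauss_Jordan_Elimination"
begin

(* Matrices are JNF matrices (real mat) with 0-based indices: paper index i
   corresponds to JNF index i-1. *)

definition nlev :: "nat \<Rightarrow> nat" where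
  "nlev k = 2 ^ k - 1"

definition Bmat :: "nat \<Rightarrow> real mat" where
  "Bmat q = (let N = (2::real) ^ q in
     mat (2 ^ q - 1) (2 ^ q - 1) (\<lambda>(i, j).
       if i = j then 2 * N / 3 - 1
       else if i = j + 1 \<or> j = i + 1 then N / 6 - 1
       else -1))"

(* restriction I_k^{k-1} : R^{n_k} -> R^{n_{k-1}},
   (I nu)_i = (nu_{2i-1} + 2 nu_{2i} + nu_{2i+1})/4 in 1-based indices *)
definition restr :: "nat \<Rightarrow> real mat" where
  "restr k = mat (nlev (k - 1)) (nlev k) (\<lambda>(i, j).
     if j = 2 * i then 1/4 else if j = 2 * i + 1 then 1/2
     else if j = 2 * i + 2 then 1/4 else 0)"

definition prolong :: "nat \<Rightarrow> real mat" where
  "prolong k = 2 \<cdot>\<^sub>m transpose_mat (restr k)"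

fun Agal :: "nat \<Rightarrow> real \<Rightarrow> nat \<Rightarrow> real mat" where
  "Agal q b 0 = ((b / 2 ^ q) ^ 2) \<cdot>\<^sub>m Bmat q"
| "Agal q b (Suc d) = restr (q - d) * Agal q b d * prolong (q - d)"

definition Alev :: "nat \<Rightarrow> real \<Rightarrow> nat \<Rightarrow> real mat" where
  "Alev q b k = Agal q b (q - k)"

definition diag_part :: "real mat \<Rightarrow> real mat" where
  "diag_part A = mat (dim_row A) (dim_col A) (\<lambda>(i, j). if i = j then A $$ (i, i) else 0)"

definition diag_inv :: "real mat \<Rightarrow> real mat" where
  "diag_inv A = the (mat_inverse (diag_part A))"

definition minv :: "real mat \<Rightarrow> real mat" where
  "minv A = the (mat_inverse A)"

definition lambda_max :: "real mat \<Rightarrow> real" where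
  "lambda_max A = Max {l. eigenvalue A l}"

definition vnorm :: "real mat \<Rightarrow> real vec \<Rightarrow> real" where
  "vnorm M v = sqrt (v \<bullet> (M *\<^sub>v v))"

definition opnorm :: "real mat \<Rightarrow> nat \<Rightarrow> real mat \<Rightarrow> real" where
  "opnorm M n X = Sup {vnorm M (X *\<^sub>v v) / vnorm M v | v. v \<in> carrier_vec n \<and> v \<noteq> 0\<^sub>v n}"

definition Kmat :: "real \<Rightarrow> real mat \<Rightarrow> real mat" where
  "Kmat \<omega> A = 1\<^sub>m (dim_row A) - \<omega> \<cdot>\<^sub>m (diag_inv A * A)"

definition Tmat :: "nat \<Rightarrow> real \<Rightarrow> nat \<Rightarrow> real mat" where
  "Tmat q b k = 1\<^sub>m (nlev k) - prolong k * minv (Alev q b (k - 1)) * restr k * Alev q b k"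

end

theory Submission
  imports Defs
begin

(* Galerkin coarsening reproduces the model matrix, R B_k P = 2 B_(k-1), so every level
   matrix is A_k = alpha_k B_k and its diagonal D_k = d_k I is a multiple of the identity.
   For the piecewise linear interpolant u of a grid vector e (zero outside (0,b)) one has
   e^T B_k e = N * int u^2 - (sum e)^2 = N * int (u - mean u)^2.  Hence B_k is positive
   definite, and since second differences do not see the mean, e^T B_k e controls the
   error of interpolating e from its coarse (odd) nodes:  d_k |e - P c|^2 <= 4 e^T A_k e.
   The bound lambda_max (D^-1 A) <= eta0 becomes u^T A u <= eta0 d_k |u|^2 by a Rayleigh
   quotient argument, which yields the smoothing property of damped Jacobi.  The coarse
   grid correction is the A-orthogonal projection onto the range of P, so combining it
   with the approximation property and the smoothing property contracts the energy norm
   by the factor 1 - eta/4.  The unit diagonal of D^-1 A forces eta0 >= 1, hence eta <= 1. *)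

section \<open>Quadratic forms of real symmetric matrices\<close>

lemma scalar_prod_self_nonneg: "0 \<le> (x :: real vec) \<bullet> x"
  unfolding scalar_prod_def by (auto intro!: sum_nonneg)

lemma scalar_prod_self_eq_sum_squares:
  "(x :: real vec) \<in> carrier_vec n \<Longrightarrow> x \<bullet> x = (\<Sum>i<n. (x $ i)^2)"
  unfolding scalar_prod_def by (simp add: power2_eq_square atLeast0LessThan)

lemma square_index_le_scalar_prod_self:
  fixes x :: "real vec"
  assumes "x \<in> carrier_vec n" "i < n"
  shows "(x $ i)^2 \<le> x \<bullet> x"
  unfolding scalar_prod_self_eq_sum_squares[OF assms(1)]
  by (rule member_le_sum) (use assms(2) in auto)

lemma scalar_prod_self_pos:
  fixes x :: "real vec"
  assumes x: "x \<in> carrier_vec n" and nz: "x \<noteq> 0\<^sub>v n"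
  shows "0 < x \<bullet> x"
proof -
  obtain i where i: "i < n" "x $ i \<noteq> 0"
    using nz x by (metis eq_vecI carrier_vecD index_zero_vec(1,2))
  have "0 < (x $ i)^2" using i by simp
  also have "\<dots> \<le> x \<bullet> x" using square_index_le_scalar_prod_self[OF x i(1)] .
  finally show ?thesis .
qed

lemma scalar_prod_minus_smult_self:
  fixes a b :: "real vec"
  assumes a: "a \<in> carrier_vec n" and b: "b \<in> carrier_vec n"
  shows "(a - t \<cdot>\<^sub>v b) \<bullet> (a - t \<cdot>\<^sub>v b) = a \<bullet> a - 2 * t * (a \<bullet> b) + t^2 * (b \<bullet> b)"
proof -
  have tb: "t \<cdot>\<^sub>v b \<in> carrier_vec n" using b by simp
  have "(a - t \<cdot>\<^sub>v b) \<bullet> (a - t \<cdot>\<^sub>v b) = a \<bullet> a - t * (a \<bullet> b) - (t * (b \<bullet> a) - t * t * (b \<bullet> b))"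
    using a b tb
    by (simp add: minus_scalar_prod_distrib[of _ n] scalar_prod_minus_distrib[of _ n] algebra_simps)
  then show ?thesis using comm_scalar_prod[OF b a] by (simp add: power2_eq_square algebra_simps)
qed

lemma smult_mat_mult_vec:
  assumes "A \<in> carrier_mat nr nc" "v \<in> carrier_vec nc"
  shows "(k \<cdot>\<^sub>m A) *\<^sub>v v = k \<cdot>\<^sub>v (A *\<^sub>v (v :: real vec))"
  using assms by (intro eq_vecI) (auto simp: scalar_prod_def sum_distrib_left ac_simps)

lemma quadratic_form_smult:
  fixes A :: "real mat"
  assumes "A \<in> carrier_mat n n" "e \<in> carrier_vec n"
  shows "e \<bullet> ((\<alpha> \<cdot>\<^sub>m A) *\<^sub>v e) = \<alpha> * (e \<bullet> (A *\<^sub>v e))"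
  using assms by (simp add: smult_mat_mult_vec[of _ n n])

lemma symmetric_scalar_prod_swap:
  fixes A :: "real mat"
  assumes A: "A \<in> carrier_mat n n" and sym: "transpose_mat A = A"
    and u: "u \<in> carrier_vec n" and w: "w \<in> carrier_vec n"
  shows "u \<bullet> (A *\<^sub>v w) = (A *\<^sub>v u) \<bullet> w"
  using transpose_vec_mult_scalar[OF A w u] sym by simp

lemma abs_quadratic_form_le:
  fixes M :: "real mat"
  assumes M: "M \<in> carrier_mat n n" and x: "x \<in> carrier_vec n"
  shows "\<bar>x \<bullet> (M *\<^sub>v x)\<bar> \<le> (\<Sum>i<n. \<Sum>j<n. \<bar>M $$ (i,j)\<bar>) * (x \<bullet> x)"
proof -
  have expand: "x \<bullet> (M *\<^sub>v x) = (\<Sum>i<n. \<Sum>j<n. x $ i * M $$ (i,j) * x $ j)"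
    using M x unfolding scalar_prod_def
    by (auto simp: sum_distrib_left row_def mult.assoc scalar_prod_def atLeast0LessThan
        intro!: sum.cong)
  have entry: "\<bar>x $ i * M $$ (i,j) * x $ j\<bar> \<le> \<bar>M $$ (i,j)\<bar> * (x \<bullet> x)"
    if "i < n" "j < n" for i j
  proof -
    have "2 * \<bar>x $ i * x $ j\<bar> \<le> (x $ i)^2 + (x $ j)^2"
      using power2_diff[of "\<bar>x $ i\<bar>" "\<bar>x $ j\<bar>"] zero_le_power2[of "\<bar>x $ i\<bar> - \<bar>x $ j\<bar>"]
      by (simp add: abs_mult)
    also have "\<dots> \<le> 2 * (x \<bullet> x)"
      using square_index_le_scalar_prod_self[OF x, of i] square_index_le_scalar_prod_self[OF x, of j]
        that by linarith
    finally have "\<bar>M $$ (i,j)\<bar> * \<bar>x $ i * x $ j\<bar> \<le> \<bar>M $$ (i,j)\<bar> * (x \<bullet> x)"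
      by (intro mult_left_mono) auto
    then show ?thesis by (simp add: abs_mult algebra_simps)
  qed
  have "\<bar>x \<bullet> (M *\<^sub>v x)\<bar> \<le> (\<Sum>i<n. \<Sum>j<n. \<bar>x $ i * M $$ (i,j) * x $ j\<bar>)"
    unfolding expand by (rule order.trans[OF sum_abs sum_mono]) (rule sum_abs)
  also have "\<dots> \<le> (\<Sum>i<n. \<Sum>j<n. \<bar>M $$ (i,j)\<bar> * (x \<bullet> x))"
    by (intro sum_mono entry) auto
  finally show ?thesis by (simp add: sum_distrib_right)
qed

lemma mult_mat_vec_bounded:
  fixes M :: "real mat"
  assumes M: "M \<in> carrier_mat n n"
  obtains C where "C \<ge> 0" "\<And>y. y \<in> carrier_vec n \<Longrightarrow> (M *\<^sub>v y) \<bullet> (M *\<^sub>v y) \<le> C * (y \<bullet> y)"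
proof
  define N where "N = transpose_mat M * M"
  have N: "N \<in> carrier_mat n n" using M unfolding N_def by auto
  show "(\<Sum>i<n. \<Sum>j<n. \<bar>N $$ (i,j)\<bar>) \<ge> 0" by (intro sum_nonneg) auto
  fix y :: "real vec" assume y: "y \<in> carrier_vec n"
  have "(M *\<^sub>v y) \<bullet> (M *\<^sub>v y) = y \<bullet> (N *\<^sub>v y)"
    using transpose_vec_mult_scalar[OF M y, of "M *\<^sub>v y"] M y N
    by (simp add: N_def comm_scalar_prod[of _ n y])
  also have "\<dots> \<le> (\<Sum>i<n. \<Sum>j<n. \<bar>N $$ (i,j)\<bar>) * (y \<bullet> y)"
    using abs_quadratic_form_le[OF N y] by linarith
  finally show "(M *\<^sub>v y) \<bullet> (M *\<^sub>v y) \<le> (\<Sum>i<n. \<Sum>j<n. \<bar>N $$ (i,j)\<bar>) * (y \<bullet> y)" .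
qed

lemma psd_cauchy_schwarz:
  fixes Q :: "real mat"
  assumes Q: "Q \<in> carrier_mat n n" and sym: "transpose_mat Q = Q"
    and psd: "\<And>u. u \<in> carrier_vec n \<Longrightarrow> 0 \<le> u \<bullet> (Q *\<^sub>v u)"
    and y: "y \<in> carrier_vec n" and z: "z \<in> carrier_vec n"
  shows "(y \<bullet> (Q *\<^sub>v z))^2 \<le> (y \<bullet> (Q *\<^sub>v y)) * (z \<bullet> (Q *\<^sub>v z))"
proof -
  define a b c where "a = y \<bullet> (Q *\<^sub>v y)" and "b = y \<bullet> (Q *\<^sub>v z)" and "c = z \<bullet> (Q *\<^sub>v z)"
  have Qy: "Q *\<^sub>v y \<in> carrier_vec n" and Qz: "Q *\<^sub>v z \<in> carrier_vec n" using Q y z by auto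
  have zy: "z \<bullet> (Q *\<^sub>v y) = b"
    unfolding b_def using symmetric_scalar_prod_swap[OF Q sym z y] comm_scalar_prod[OF Qz y] by simp
  have quadratic: "0 \<le> a + 2*t*b + t^2*c" for t
  proof -
    have v: "y + t \<cdot>\<^sub>v z \<in> carrier_vec n" using y z by auto
    have "Q *\<^sub>v (y + t \<cdot>\<^sub>v z) = Q *\<^sub>v y + t \<cdot>\<^sub>v (Q *\<^sub>v z)"
      using Q y z by (simp add: mult_add_distrib_mat_vec mult_mat_vec)
    then have "(y + t \<cdot>\<^sub>v z) \<bullet> (Q *\<^sub>v (y + t \<cdot>\<^sub>v z)) = a + 2*t*b + t^2*c"
      using y z Qy Qz zy unfolding a_def b_def c_def
      by (simp add: add_scalar_prod_distrib[of _ n] scalar_prod_add_distrib[of _ n]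
          power2_eq_square algebra_simps)
    then show ?thesis using psd[OF v] by simp
  qed
  show ?thesis
  proof (cases "c = 0")
    case True
    have "b = 0"
    proof (rule ccontr)
      assume "b \<noteq> 0"
      with True quadratic[of "-(a+1)/(2*b)"] show False by (simp add: field_simps)
    qed
    then show ?thesis using True unfolding a_def b_def c_def by simp
  next
    case False
    with psd[OF z] have c: "c > 0" unfolding c_def by simp
    have "0 \<le> a + 2*(-b/c)*b + (-b/c)^2*c" by (rule quadratic)
    also have "\<dots> = a - b^2/c" using c by (simp add: field_simps power2_eq_square)
    finally show ?thesis using c unfolding a_def b_def c_def by (simp add: field_simps)
  qed
qed

lemma transpose_smult_mat: "transpose_mat (a \<cdot>\<^sub>m (M :: real mat)) = a \<cdot>\<^sub>m transpose_mat M"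
  by (rule eq_matI) auto

lemma smult_smult_mat: "a \<cdot>\<^sub>m (c \<cdot>\<^sub>m (M :: real mat)) = (a * c) \<cdot>\<^sub>m M"
  by (rule eq_matI) auto

lemma the_mat_inverse:
  fixes M :: "real mat"
  assumes M: "M \<in> carrier_mat n n" and det: "det M \<noteq> 0"
  shows "M * the (mat_inverse M) = 1\<^sub>m n" "the (mat_inverse M) * M = 1\<^sub>m n"
    "the (mat_inverse M) \<in> carrier_mat n n"
proof -
  have "M \<in> Units (ring_mat TYPE(real) n n)" by (rule det_non_zero_imp_unit[OF M det])
  then obtain Y where Y: "mat_inverse M = Some Y" by (metis mat_inverse(1)[OF M] option.exhaust)
  with mat_inverse(2)[OF M Y]
  show "M * the (mat_inverse M) = 1\<^sub>m n" "the (mat_inverse M) * M = 1\<^sub>m n"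
    "the (mat_inverse M) \<in> carrier_mat n n" by auto
qed

lemma psd_nonsingular_coercive:
  fixes Q :: "real mat"
  assumes Q: "Q \<in> carrier_mat n n" and sym: "transpose_mat Q = Q"
    and psd: "\<And>u. u \<in> carrier_vec n \<Longrightarrow> 0 \<le> u \<bullet> (Q *\<^sub>v u)" and det: "det Q \<noteq> 0"
  obtains K where "K \<ge> 0" "\<And>z. z \<in> carrier_vec n \<Longrightarrow> z \<bullet> z \<le> K * (z \<bullet> (Q *\<^sub>v z))"
proof -
  define Y where "Y = the (mat_inverse Q)"
  have Y: "Y \<in> carrier_mat n n" "Y * Q = 1\<^sub>m n" using the_mat_inverse[OF Q det] unfolding Y_def by auto
  obtain CY where CY: "CY \<ge> 0" "\<And>y. y \<in> carrier_vec n \<Longrightarrow> (Y *\<^sub>v y) \<bullet> (Y *\<^sub>v y) \<le> CY * (y \<bullet> y)"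
    using mult_mat_vec_bounded[OF Y(1)] by blast
  define CQ where "CQ = (\<Sum>i<n. \<Sum>j<n. \<bar>Q $$ (i,j)\<bar>)"
  have CQ: "CQ \<ge> 0" unfolding CQ_def by (intro sum_nonneg) auto
  have "z \<bullet> z \<le> (CY * CQ) * (z \<bullet> (Q *\<^sub>v z))" if z: "z \<in> carrier_vec n" for z
  proof -
    have Qz: "Q *\<^sub>v z \<in> carrier_vec n" using Q z by auto
    define G where "G = (Q *\<^sub>v z) \<bullet> (Q *\<^sub>v z)"
    have "G^2 \<le> ((Q *\<^sub>v z) \<bullet> (Q *\<^sub>v (Q *\<^sub>v z))) * (z \<bullet> (Q *\<^sub>v z))"
      unfolding G_def by (rule psd_cauchy_schwarz[OF Q sym psd Qz z])
    also have "\<dots> \<le> (CQ * G) * (z \<bullet> (Q *\<^sub>v z))"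
      using abs_quadratic_form_le[OF Q Qz] psd[OF z] unfolding CQ_def G_def
      by (intro mult_right_mono) auto
    finally have "G * G \<le> G * (CQ * (z \<bullet> (Q *\<^sub>v z)))" by (simp add: power2_eq_square ac_simps)
    then have GQ: "G \<le> CQ * (z \<bullet> (Q *\<^sub>v z))"
      using scalar_prod_self_nonneg[of "Q *\<^sub>v z"] CQ psd[OF z] unfolding G_def
      by (cases "G = 0") (auto simp: G_def)
    have "z = Y *\<^sub>v (Q *\<^sub>v z)" using Y Q z by (simp flip: assoc_mult_mat_vec)
    then have "z \<bullet> z \<le> CY * G" unfolding G_def using CY(2)[OF Qz] by simp
    also have "\<dots> \<le> CY * (CQ * (z \<bullet> (Q *\<^sub>v z)))" by (rule mult_left_mono[OF GQ CY(1)])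
    finally show ?thesis by (simp add: mult.assoc)
  qed
  with CY(1) CQ that show ?thesis by (meson mult_nonneg_nonneg)
qed

text \<open>If \<open>\<lambda>\<close> were not an eigenvalue, \<open>\<lambda>I - S\<close> would be nonsingular and hence coercive,
  which keeps the Rayleigh quotient a fixed distance below \<open>\<lambda>\<close>.\<close>

lemma sharp_rayleigh_bound_is_eigenvalue:
  fixes S :: "real mat"
  assumes S: "S \<in> carrier_mat n n" and sym: "transpose_mat S = S"
    and below: "\<And>x. x \<in> carrier_vec n \<Longrightarrow> x \<bullet> (S *\<^sub>v x) \<le> lam * (x \<bullet> x)"
    and sharp: "\<And>\<epsilon>. \<epsilon> > 0 \<Longrightarrow> \<exists>x\<in>carrier_vec n. (lam - \<epsilon>) * (x \<bullet> x) < x \<bullet> (S *\<^sub>v x)"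
  shows "eigenvalue S lam"
proof -
  define Q where "Q = lam \<cdot>\<^sub>m 1\<^sub>m n - S"
  have Q: "Q \<in> carrier_mat n n" unfolding Q_def using S by auto
  have Qv: "Q *\<^sub>v x = lam \<cdot>\<^sub>v x - S *\<^sub>v x" if "x \<in> carrier_vec n" for x
    unfolding Q_def using S that
    by (simp add: minus_mult_distrib_mat_vec[of _ n n] smult_mat_mult_vec[of _ n n])
  have xQx: "x \<bullet> (Q *\<^sub>v x) = lam * (x \<bullet> x) - x \<bullet> (S *\<^sub>v x)" if "x \<in> carrier_vec n" for x
    using Qv[OF that] that S by (simp add: scalar_prod_minus_distrib[of _ n])
  have psd: "0 \<le> x \<bullet> (Q *\<^sub>v x)" if "x \<in> carrier_vec n" for x
    using xQx[OF that] below[OF that] by simp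
  have symQ: "transpose_mat Q = Q"
  proof (rule eq_matI)
    fix i j assume "i < dim_row Q" "j < dim_col Q"
    then show "transpose_mat Q $$ (i,j) = Q $$ (i,j)"
      using arg_cong[OF sym, of "\<lambda>M. M $$ (i,j)"] S Q unfolding Q_def by auto
  qed (use Q in auto)
  have "det Q = 0"
  proof (rule ccontr)
    assume "det Q \<noteq> 0"
    then obtain K where K: "K \<ge> 0" "\<And>z. z \<in> carrier_vec n \<Longrightarrow> z \<bullet> z \<le> K * (z \<bullet> (Q *\<^sub>v z))"
      using psd_nonsingular_coercive[OF Q symQ psd] by blast
    obtain x where x: "x \<in> carrier_vec n" and gap: "(lam - 1 / (K + 1)) * (x \<bullet> x) < x \<bullet> (S *\<^sub>v x)"
      using sharp[of "1 / (K + 1)"] K(1) by auto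
    have "x \<bullet> x \<le> (K + 1) * (x \<bullet> (Q *\<^sub>v x))" using K(2)[OF x] psd[OF x] by (simp add: algebra_simps)
    then have "x \<bullet> (S *\<^sub>v x) \<le> (lam - 1 / (K + 1)) * (x \<bullet> x)"
      using xQx[OF x] K(1) by (simp add: field_simps)
    with gap show False by simp
  qed
  then obtain v where v: "v \<in> carrier_vec n" "v \<noteq> 0\<^sub>v n" "Q *\<^sub>v v = 0\<^sub>v n"
    using det_0_iff_vec_prod_zero[OF Q] by blast
  have "S *\<^sub>v v = lam \<cdot>\<^sub>v v"
  proof (rule eq_vecI)
    fix i assume "i < dim_vec (lam \<cdot>\<^sub>v v)"
    with v Qv[OF v(1)] S show "(S *\<^sub>v v) $ i = (lam \<cdot>\<^sub>v v) $ i"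
      by (metis carrier_matD(1) carrier_vecD index_minus_vec(1) index_smult_vec(2)
          index_zero_vec(1) dim_mult_mat_vec right_minus_eq)
  qed (use S v in auto)
  then show ?thesis unfolding eigenvalue_def eigenvector_def using v S by auto
qed

lemma symmetric_rayleigh_eigenvalue:
  fixes S :: "real mat"
  assumes S: "S \<in> carrier_mat n n" and sym: "transpose_mat S = S" and n: "n > 0"
  obtains lam where "eigenvalue S lam" "\<And>x. x \<in> carrier_vec n \<Longrightarrow> x \<bullet> (S *\<^sub>v x) \<le> lam * (x \<bullet> x)"
proof -
  define RQ where "RQ = {x \<bullet> (S *\<^sub>v x) / (x \<bullet> x) | x. x \<in> carrier_vec n \<and> x \<noteq> 0\<^sub>v n}"
  have "unit_vec n 0 \<in> carrier_vec n" "unit_vec n 0 \<noteq> 0\<^sub>v n"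
    using n by (auto dest!: arg_cong[where f = "\<lambda>v. v $ 0"])
  then have RQ_ne: "RQ \<noteq> {}" unfolding RQ_def by blast
  have "r \<le> (\<Sum>i<n. \<Sum>j<n. \<bar>S $$ (i,j)\<bar>)" if "r \<in> RQ" for r
    using that abs_quadratic_form_le[OF S] scalar_prod_self_pos
    unfolding RQ_def by (force simp: divide_le_eq)
  then have bdd: "bdd_above RQ" by (rule bdd_aboveI)
  have below: "x \<bullet> (S *\<^sub>v x) \<le> Sup RQ * (x \<bullet> x)" if x: "x \<in> carrier_vec n" for x
  proof (cases "x = 0\<^sub>v n")
    case False
    then have "x \<bullet> (S *\<^sub>v x) / (x \<bullet> x) \<le> Sup RQ"
      using x bdd unfolding RQ_def by (intro cSup_upper) auto
    then show ?thesis using scalar_prod_self_pos[OF x False] by (simp add: divide_le_eq)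
  qed (use S in simp)
  have sharp: "\<exists>x\<in>carrier_vec n. (Sup RQ - \<epsilon>) * (x \<bullet> x) < x \<bullet> (S *\<^sub>v x)" if "\<epsilon> > 0" for \<epsilon>
  proof -
    have "Sup RQ - \<epsilon> < Sup RQ" using that by simp
    then obtain r where "r \<in> RQ" "Sup RQ - \<epsilon> < r" using less_cSupE RQ_ne by blast
    then show ?thesis unfolding RQ_def using scalar_prod_self_pos by (auto simp: less_divide_eq)
  qed
  show ?thesis
    using that sharp_rayleigh_bound_is_eigenvalue[OF S sym below sharp] below by blast
qed

lemma eigenvalue_le_lambda_max:
  fixes S :: "real mat"
  assumes S: "S \<in> carrier_mat n n" and "eigenvalue S l"
  shows "l \<le> lambda_max S"
proof -
  have "char_poly S \<noteq> 0" using degree_monic_char_poly[OF S] by auto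
  then have "finite {l. poly (char_poly S) l = 0}" by (rule poly_roots_finite)
  then have "finite {l. eigenvalue S l}" using eigenvalue_root_char_poly[OF S] by simp
  then show ?thesis unfolding lambda_max_def using assms(2) by (intro Max_ge) auto
qed

lemma quadratic_form_le_lambda_max:
  fixes S :: "real mat"
  assumes S: "S \<in> carrier_mat n n" and sym: "transpose_mat S = S" and x: "x \<in> carrier_vec n"
  shows "x \<bullet> (S *\<^sub>v x) \<le> lambda_max S * (x \<bullet> x)"
proof (cases "n = 0")
  case True
  then show ?thesis using S x by (simp add: scalar_prod_def)
next
  case False
  then obtain lam where "eigenvalue S lam" "x \<bullet> (S *\<^sub>v x) \<le> lam * (x \<bullet> x)"
    using symmetric_rayleigh_eigenvalue[OF S sym] x by (metis gr0I)
  with eigenvalue_le_lambda_max[OF S] scalar_prod_self_nonneg[of x] show ?thesis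
    by (meson mult_right_mono order.trans)
qed

lemma diagonal_le_lambda_max:
  fixes S :: "real mat"
  assumes S: "S \<in> carrier_mat n n" and sym: "transpose_mat S = S" and i: "i < n"
  shows "S $$ (i,i) \<le> lambda_max S"
  using quadratic_form_le_lambda_max[OF S sym, of "unit_vec n i"] S i by simp

lemma diag_inv_const_diagonal:
  fixes A :: "real mat"
  assumes A: "A \<in> carrier_mat n n" and diag: "\<forall>i<n. A $$ (i,i) = d" and d: "d \<noteq> 0"
  shows "diag_inv A = (1 / d) \<cdot>\<^sub>m 1\<^sub>m n"
proof -
  have D: "diag_part A = d \<cdot>\<^sub>m 1\<^sub>m n"
    unfolding diag_part_def using A diag by (intro eq_matI) auto
  define Y where "Y = the (mat_inverse (d \<cdot>\<^sub>m 1\<^sub>m n))"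
  have "det (d \<cdot>\<^sub>m 1\<^sub>m n) \<noteq> 0" using d by simp
  from the_mat_inverse[OF _ this] have Y: "Y \<in> carrier_mat n n" "(d \<cdot>\<^sub>m 1\<^sub>m n) * Y = 1\<^sub>m n"
    unfolding Y_def by auto
  then have "d \<cdot>\<^sub>m Y = 1\<^sub>m n" by (simp add: mult_smult_assoc_mat[of _ n n _ n])
  then have "(1 / d) \<cdot>\<^sub>m (d \<cdot>\<^sub>m Y) = (1 / d) \<cdot>\<^sub>m 1\<^sub>m n" by simp
  then show ?thesis using d unfolding diag_inv_def D Y_def[symmetric] smult_smult_mat
    by (metis divide_self_if eq_matI index_smult_mat(1,2,3) mult_1 times_divide_eq_left)
qed

lemma pos_def_det_nonzero:
  fixes A :: "real mat"
  assumes A: "A \<in> carrier_mat n n"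
    and pd: "\<And>v. v \<in> carrier_vec n \<Longrightarrow> v \<noteq> 0\<^sub>v n \<Longrightarrow> 0 < v \<bullet> (A *\<^sub>v v)"
  shows "det A \<noteq> 0"
proof
  assume "det A = 0"
  then obtain v where "v \<in> carrier_vec n" "v \<noteq> 0\<^sub>v n" "A *\<^sub>v v = 0\<^sub>v n"
    using det_0_iff_vec_prod_zero[OF A] by blast
  with pd show False by fastforce
qed

lemma vnorm_sq: "0 \<le> v \<bullet> (M *\<^sub>v v) \<Longrightarrow> (vnorm M v)^2 = v \<bullet> (M *\<^sub>v v)"
  unfolding vnorm_def by simp

lemma opnorm_le_sqrt:
  fixes A M :: "real mat"
  assumes n: "n > 0"
    and pd: "\<And>v. v \<in> carrier_vec n \<Longrightarrow> v \<noteq> 0\<^sub>v n \<Longrightarrow> 0 < v \<bullet> (A *\<^sub>v v)"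
    and contr: "\<And>v. v \<in> carrier_vec n \<Longrightarrow> (M *\<^sub>v v) \<bullet> (A *\<^sub>v (M *\<^sub>v v)) \<le> c * (v \<bullet> (A *\<^sub>v v))"
    and c: "c \<ge> 0"
  shows "opnorm A n M \<le> sqrt c"
  unfolding opnorm_def
proof (rule cSup_least)
  have "unit_vec n 0 \<in> carrier_vec n" "unit_vec n 0 \<noteq> 0\<^sub>v n"
    using n by (auto dest!: arg_cong[where f = "\<lambda>v. v $ 0"])
  then show "{vnorm A (M *\<^sub>v v) / vnorm A v | v. v \<in> carrier_vec n \<and> v \<noteq> 0\<^sub>v n} \<noteq> {}" by blast
next
  fix s assume "s \<in> {vnorm A (M *\<^sub>v v) / vnorm A v | v. v \<in> carrier_vec n \<and> v \<noteq> 0\<^sub>v n}"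
  then obtain v where v: "v \<in> carrier_vec n" "v \<noteq> 0\<^sub>v n" and s: "s = vnorm A (M *\<^sub>v v) / vnorm A v"
    by blast
  have "vnorm A (M *\<^sub>v v) \<le> sqrt (c * (v \<bullet> (A *\<^sub>v v)))"
    unfolding vnorm_def using contr[OF v(1)] by simp
  also have "\<dots> = sqrt c * vnorm A v" unfolding vnorm_def by (simp add: real_sqrt_mult)
  finally show "s \<le> sqrt c"
    unfolding s using pd[OF v] by (simp add: vnorm_def divide_le_eq)
qed

section \<open>Smoothing and two-grid estimates\<close>

lemma jacobi_smoothing:
  fixes A :: "real mat"
  assumes A: "A \<in> carrier_mat n n" and sym: "transpose_mat A = A" and d: "d > 0"
    and spec: "\<And>u. u \<in> carrier_vec n \<Longrightarrow> u \<bullet> (A *\<^sub>v u) \<le> \<eta>0 * d * (u \<bullet> u)"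
    and eta: "\<eta> \<le> \<omega> * (2 - \<omega> * \<eta>0)" and u: "u \<in> carrier_vec n"
  shows "((1\<^sub>m n - (\<omega> / d) \<cdot>\<^sub>m A) *\<^sub>v u) \<bullet> (A *\<^sub>v ((1\<^sub>m n - (\<omega> / d) \<cdot>\<^sub>m A) *\<^sub>v u))
     \<le> u \<bullet> (A *\<^sub>v u) - (\<eta> / d) * ((A *\<^sub>v u) \<bullet> (A *\<^sub>v u))"
proof -
  define s y where "s = \<omega> / d" and "y = A *\<^sub>v u"
  have y: "y \<in> carrier_vec n" and Ay: "A *\<^sub>v y \<in> carrier_vec n" unfolding y_def using A u by auto
  have Ku: "(1\<^sub>m n - s \<cdot>\<^sub>m A) *\<^sub>v u = u - s \<cdot>\<^sub>v y"
    unfolding y_def using A u by (simp add: minus_mult_distrib_mat_vec[of _ n n] smult_mat_mult_vec[of _ n n])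
  have AKu: "A *\<^sub>v (u - s \<cdot>\<^sub>v y) = y - s \<cdot>\<^sub>v (A *\<^sub>v y)"
    using A u y by (simp add: mult_minus_distrib_mat_vec[of _ n n] mult_mat_vec y_def)
  have uAy: "u \<bullet> (A *\<^sub>v y) = y \<bullet> y" using symmetric_scalar_prod_swap[OF A sym u y] unfolding y_def .
  have "((1\<^sub>m n - s \<cdot>\<^sub>m A) *\<^sub>v u) \<bullet> (A *\<^sub>v ((1\<^sub>m n - s \<cdot>\<^sub>m A) *\<^sub>v u))
      = u \<bullet> y - 2 * s * (y \<bullet> y) + s^2 * (y \<bullet> (A *\<^sub>v y))"
    unfolding Ku AKu using u y Ay uAy
    by (simp add: minus_scalar_prod_distrib[of _ n] scalar_prod_minus_distrib[of _ n]
        power2_eq_square algebra_simps)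
  also have "\<dots> \<le> u \<bullet> y - 2 * s * (y \<bullet> y) + s^2 * (\<eta>0 * d * (y \<bullet> y))"
    using mult_left_mono[OF spec[OF y], of "s^2"] by simp
  also have "\<dots> = u \<bullet> y - (\<omega> * (2 - \<omega> * \<eta>0) / d) * (y \<bullet> y)"
    unfolding s_def using d by (simp add: power2_eq_square field_simps)
  also have "\<dots> \<le> u \<bullet> y - (\<eta> / d) * (y \<bullet> y)"
    using eta d scalar_prod_self_nonneg[of y] by (simp add: divide_right_mono mult_right_mono)
  finally show ?thesis unfolding s_def y_def .
qed

lemma coarse_correction_residual:
  fixes A R P X :: "real mat"
  assumes A: "A \<in> carrier_mat n n" and R: "R \<in> carrier_mat nc n" and P: "P \<in> carrier_mat n nc"
    and X: "X \<in> carrier_mat nc nc" and RAPX: "R * A * P * X = 1\<^sub>m nc" and v: "v \<in> carrier_vec n"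
  shows "(1\<^sub>m n - P * X * R * A) *\<^sub>v v = v - P *\<^sub>v (X *\<^sub>v (R *\<^sub>v (A *\<^sub>v v)))"
    and "R *\<^sub>v (A *\<^sub>v ((1\<^sub>m n - P * X * R * A) *\<^sub>v v)) = 0\<^sub>v nc"
proof -
  define w where "w = R *\<^sub>v (A *\<^sub>v v)"
  have w: "w \<in> carrier_vec nc" unfolding w_def using R A v by simp
  have PX: "P * X \<in> carrier_mat n nc" and PXR: "P * X * R \<in> carrier_mat n n" using P X R by auto
  have "(P * X * R * A) *\<^sub>v v = (P * X * R) *\<^sub>v (A *\<^sub>v v)"
    by (rule assoc_mult_mat_vec[OF PXR A v])
  also have "\<dots> = (P * X) *\<^sub>v w" unfolding w_def by (rule assoc_mult_mat_vec[OF PX R]) (use A v in simp)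
  also have "\<dots> = P *\<^sub>v (X *\<^sub>v w)" by (rule assoc_mult_mat_vec[OF P X w])
  finally show T: "(1\<^sub>m n - P * X * R * A) *\<^sub>v v = v - P *\<^sub>v (X *\<^sub>v w)"
    using PXR A v by (simp add: minus_mult_distrib_mat_vec[of _ n n])
  have RA: "R * A \<in> carrier_mat nc n" and RAP: "R * A * P \<in> carrier_mat nc nc" using R A P by auto
  have "(R * A * P * X) *\<^sub>v w = (R * A * P) *\<^sub>v (X *\<^sub>v w)" by (rule assoc_mult_mat_vec[OF RAP X w])
  also have "\<dots> = (R * A) *\<^sub>v (P *\<^sub>v (X *\<^sub>v w))"
    by (rule assoc_mult_mat_vec[OF RA P]) (use X w in simp)
  also have "\<dots> = R *\<^sub>v (A *\<^sub>v (P *\<^sub>v (X *\<^sub>v w)))"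
    by (rule assoc_mult_mat_vec[OF R A]) (use P X w in simp)
  finally have "R *\<^sub>v (A *\<^sub>v (P *\<^sub>v (X *\<^sub>v w))) = w" using RAPX w by simp
  then show "R *\<^sub>v (A *\<^sub>v ((1\<^sub>m n - P * X * R * A) *\<^sub>v v)) = 0\<^sub>v nc"
    unfolding T using A R P X v w
    by (simp add: mult_minus_distrib_mat_vec[of _ n n] mult_minus_distrib_mat_vec[of _ nc n] w_def)
qed

lemma prolongation_A_orthogonal:
  fixes A R :: "real mat"
  assumes A: "A \<in> carrier_mat n n" and R: "R \<in> carrier_mat nc n"
    and e: "e \<in> carrier_vec n" and RAe: "R *\<^sub>v (A *\<^sub>v e) = 0\<^sub>v nc" and c: "c \<in> carrier_vec nc"
  shows "((s \<cdot>\<^sub>m transpose_mat R) *\<^sub>v c) \<bullet> (A *\<^sub>v e) = 0"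
proof -
  have Rt: "transpose_mat R \<in> carrier_mat n nc" and Ae: "A *\<^sub>v e \<in> carrier_vec n" using R A e by auto
  have "((s \<cdot>\<^sub>m transpose_mat R) *\<^sub>v c) \<bullet> (A *\<^sub>v e) = s * ((transpose_mat R *\<^sub>v c) \<bullet> (A *\<^sub>v e))"
    using smult_mat_mult_vec[OF Rt c] mult_mat_vec_carrier[OF Rt c] Ae by simp
  also have "\<dots> = s * (c \<bullet> (R *\<^sub>v (A *\<^sub>v e)))" by (simp add: transpose_vec_mult_scalar[OF R Ae c])
  finally show ?thesis using RAe c by simp
qed

lemma energy_le_of_A_orthogonal:
  fixes A :: "real mat"
  assumes A: "A \<in> carrier_mat n n" and sym: "transpose_mat A = A"
    and psd: "0 \<le> p \<bullet> (A *\<^sub>v p)" and v: "v \<in> carrier_vec n" and p: "p \<in> carrier_vec n"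
    and orth: "p \<bullet> (A *\<^sub>v (v - p)) = 0"
  shows "(v - p) \<bullet> (A *\<^sub>v (v - p)) \<le> v \<bullet> (A *\<^sub>v v)"
proof -
  define e where "e = v - p"
  have e: "e \<in> carrier_vec n" and Ae: "A *\<^sub>v e \<in> carrier_vec n" and Ap: "A *\<^sub>v p \<in> carrier_vec n"
    unfolding e_def using v p A by auto
  have "v = e + p" unfolding e_def using v p by auto
  then have "v \<bullet> (A *\<^sub>v v) = e \<bullet> (A *\<^sub>v e) + e \<bullet> (A *\<^sub>v p) + p \<bullet> (A *\<^sub>v e) + p \<bullet> (A *\<^sub>v p)"
    using A e p Ae Ap
    by (simp add: mult_add_distrib_mat_vec[of _ n n] add_scalar_prod_distrib[of _ n]
        scalar_prod_add_distrib[of _ n])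
  moreover have "e \<bullet> (A *\<^sub>v p) = p \<bullet> (A *\<^sub>v e)"
    using symmetric_scalar_prod_swap[OF A sym e p] comm_scalar_prod[OF Ae p] by simp
  ultimately show ?thesis using orth psd unfolding e_def by simp
qed

lemma residual_lower_bound:
  fixes A :: "real mat"
  assumes A: "A \<in> carrier_mat n n" and e: "e \<in> carrier_vec n" and p: "p \<in> carrier_vec n"
    and orth: "p \<bullet> (A *\<^sub>v e) = 0" and d: "d > 0" and C: "C > 0"
    and approx: "d * ((e - p) \<bullet> (e - p)) \<le> C * (e \<bullet> (A *\<^sub>v e))"
  shows "(d / C) * (e \<bullet> (A *\<^sub>v e)) \<le> (A *\<^sub>v e) \<bullet> (A *\<^sub>v e)"
proof -
  define g f E t where "g = A *\<^sub>v e" and "f = e - p" and "E = e \<bullet> (A *\<^sub>v e)" and "t = d / C"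
  have g: "g \<in> carrier_vec n" and f: "f \<in> carrier_vec n" unfolding g_def f_def using A e p by auto
  have gf: "g \<bullet> f = E"
    unfolding g_def f_def E_def using A e p orth comm_scalar_prod[of "A *\<^sub>v e" n]
    by (simp add: scalar_prod_minus_distrib[of _ n])
  have "0 \<le> (g - t \<cdot>\<^sub>v f) \<bullet> (g - t \<cdot>\<^sub>v f)" by (rule scalar_prod_self_nonneg)
  also have "\<dots> = g \<bullet> g - 2 * t * E + t^2 * (f \<bullet> f)"
    using scalar_prod_minus_smult_self[OF g f] gf by simp
  also have "t^2 * (f \<bullet> f) = (t / C) * (d * (f \<bullet> f))" unfolding t_def by (simp add: power2_eq_square)
  also have "\<dots> \<le> (t / C) * (C * E)"
    using approx d C unfolding t_def f_def E_def by (intro mult_left_mono) auto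
  finally show ?thesis using C unfolding t_def g_def E_def by simp
qed

lemma two_grid_energy_contraction:
  fixes A R X :: "real mat"
  assumes A: "A \<in> carrier_mat n n" and sym: "transpose_mat A = A" and d: "d > 0"
    and spec: "\<And>u. u \<in> carrier_vec n \<Longrightarrow> u \<bullet> (A *\<^sub>v u) \<le> \<eta>0 * d * (u \<bullet> u)"
    and psd: "\<And>u. u \<in> carrier_vec n \<Longrightarrow> 0 \<le> u \<bullet> (A *\<^sub>v u)"
    and R: "R \<in> carrier_mat nc n" and P: "P = s \<cdot>\<^sub>m transpose_mat R"
    and X: "X \<in> carrier_mat nc nc" and RAPX: "R * A * P * X = 1\<^sub>m nc"
    and approx: "\<And>e. e \<in> carrier_vec n \<Longrightarrow>
      \<exists>c\<in>carrier_vec nc. d * ((e - P *\<^sub>v c) \<bullet> (e - P *\<^sub>v c)) \<le> C * (e \<bullet> (A *\<^sub>v e))"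
    and eta: "\<eta> \<le> \<omega> * (2 - \<omega> * \<eta>0)" and eta_pos: "0 \<le> \<eta>" and eta_C: "\<eta> \<le> C"
    and C: "C > 0" and v: "v \<in> carrier_vec n"
  defines "M \<equiv> (1\<^sub>m n - (\<omega> / d) \<cdot>\<^sub>m A) * (1\<^sub>m n - P * X * R * A)"
  shows "(M *\<^sub>v v) \<bullet> (A *\<^sub>v (M *\<^sub>v v)) \<le> (1 - \<eta> / C) * (v \<bullet> (A *\<^sub>v v))"
proof -
  have Pc: "P \<in> carrier_mat n nc" using P R by simp
  define e where "e = (1\<^sub>m n - P * X * R * A) *\<^sub>v v"
  define y where "y = X *\<^sub>v (R *\<^sub>v (A *\<^sub>v v))"
  have y: "y \<in> carrier_vec nc" unfolding y_def using X R A v by simp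
  have e_eq: "e = v - P *\<^sub>v y" and RAe: "R *\<^sub>v (A *\<^sub>v e) = 0\<^sub>v nc"
    unfolding e_def y_def using coarse_correction_residual[OF A R Pc X RAPX v] by auto
  have e: "e \<in> carrier_vec n" unfolding e_eq using v Pc y by simp
  have orth: "(P *\<^sub>v c) \<bullet> (A *\<^sub>v e) = 0" if "c \<in> carrier_vec nc" for c
    unfolding P using prolongation_A_orthogonal[OF A R e RAe that] .
  define E where "E = e \<bullet> (A *\<^sub>v e)"
  have E_le: "E \<le> v \<bullet> (A *\<^sub>v v)"
    unfolding E_def e_eq using Pc y v orth[OF y] psd
    by (intro energy_le_of_A_orthogonal[OF A sym]) (auto simp: e_eq)
  obtain c where c: "c \<in> carrier_vec nc" and "d * ((e - P *\<^sub>v c) \<bullet> (e - P *\<^sub>v c)) \<le> C * E"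
    using approx[OF e] unfolding E_def by blast
  then have res: "(d / C) * E \<le> (A *\<^sub>v e) \<bullet> (A *\<^sub>v e)"
    unfolding E_def using Pc c C d orth[OF c] by (intro residual_lower_bound[OF A e]) auto
  have "1\<^sub>m n - (\<omega> / d) \<cdot>\<^sub>m A \<in> carrier_mat n n" "1\<^sub>m n - P * X * R * A \<in> carrier_mat n n"
    using A Pc R X by auto
  from assoc_mult_mat_vec[OF this v]
  have "(M *\<^sub>v v) \<bullet> (A *\<^sub>v (M *\<^sub>v v))
      = ((1\<^sub>m n - (\<omega> / d) \<cdot>\<^sub>m A) *\<^sub>v e) \<bullet> (A *\<^sub>v ((1\<^sub>m n - (\<omega> / d) \<cdot>\<^sub>m A) *\<^sub>v e))"
    unfolding M_def e_def by simp
  also have "\<dots> \<le> E - (\<eta> / d) * ((A *\<^sub>v e) \<bullet> (A *\<^sub>v e))"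
    unfolding E_def by (rule jacobi_smoothing[OF A sym d spec eta e])
  also have "\<dots> \<le> E - (\<eta> / d) * ((d / C) * E)"
    using mult_left_mono[OF res, of "\<eta> / d"] eta_pos d by simp
  also have "\<dots> = (1 - \<eta> / C) * E" using d by (simp add: field_simps)
  also have "\<dots> \<le> (1 - \<eta> / C) * (v \<bullet> (A *\<^sub>v v))"
    using E_le eta_C C by (intro mult_left_mono) auto
  finally show ?thesis .
qed

lemma Kmat_const_diagonal:
  fixes A :: "real mat"
  assumes A: "A \<in> carrier_mat n n" and diag: "\<forall>i<n. A $$ (i,i) = d" and d: "d \<noteq> 0"
  shows "Kmat \<omega> A = 1\<^sub>m n - (\<omega> / d) \<cdot>\<^sub>m A"
  unfolding Kmat_def diag_inv_const_diagonal[OF A diag d] using A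
  by (simp add: mult_smult_assoc_mat[of _ n n _ n] smult_smult_mat)

lemma const_diagonal_spectral_bound:
  fixes A :: "real mat"
  assumes A: "A \<in> carrier_mat n n" and sym: "transpose_mat A = A"
    and diag: "\<forall>i<n. A $$ (i,i) = d" and d: "d > 0"
    and lm: "lambda_max (diag_inv A * A) \<le> \<eta>0"
  shows "\<And>u. u \<in> carrier_vec n \<Longrightarrow> u \<bullet> (A *\<^sub>v u) \<le> \<eta>0 * d * (u \<bullet> u)"
    and "n > 0 \<Longrightarrow> 1 \<le> \<eta>0"
proof -
  have d0: "d \<noteq> 0" using d by simp
  define S where "S = (1 / d) \<cdot>\<^sub>m A"
  have DA: "diag_inv A * A = S"
    unfolding S_def diag_inv_const_diagonal[OF A diag d0] using A by (simp add: mult_smult_assoc_mat[of _ n n _ n])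
  have S: "S \<in> carrier_mat n n" "transpose_mat S = S"
    unfolding S_def using A sym by (auto simp: transpose_smult_mat)
  show "u \<bullet> (A *\<^sub>v u) \<le> \<eta>0 * d * (u \<bullet> u)" if u: "u \<in> carrier_vec n" for u
  proof -
    have "u \<bullet> (A *\<^sub>v u) = d * (u \<bullet> (S *\<^sub>v u))"
      unfolding S_def quadratic_form_smult[OF A u] using d by simp
    also have "\<dots> \<le> d * (lambda_max S * (u \<bullet> u))"
      using quadratic_form_le_lambda_max[OF S u] d by simp
    also have "\<dots> \<le> d * (\<eta>0 * (u \<bullet> u))"
      using lm scalar_prod_self_nonneg[of u] d unfolding DA by (simp add: mult_right_mono)
    finally show ?thesis by (simp add: ac_simps)
  qed
  assume "n > 0"
  with diagonal_le_lambda_max[OF S, of 0] A d diag have "1 \<le> lambda_max S" by (simp add: S_def)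
  with lm show "1 \<le> \<eta>0" unfolding DA by simp
qed

lemma smoothing_constant_le_1:
  fixes \<omega> \<eta> \<eta>0 :: real
  assumes "1 \<le> \<eta>0" "0 < \<omega>" "\<eta> \<le> \<omega> * (2 - \<omega> * \<eta>0)"
  shows "\<eta> \<le> 1"
proof -
  have "\<omega> * (2 - \<omega> * \<eta>0) \<le> \<omega> * (2 - \<omega>)" using assms by (intro mult_left_mono) auto
  also have "\<dots> = 1 - (1 - \<omega>)^2" by (simp add: power2_eq_square algebra_simps)
  finally show ?thesis using assms(3) zero_le_power2[of "1 - \<omega>"] by linarith
qed

lemma Kmat_smoothing:
  fixes A :: "real mat"
  assumes A: "A \<in> carrier_mat n n" and sym: "transpose_mat A = A"
    and diag: "\<forall>i<n. A $$ (i,i) = d" and d: "d > 0"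
    and psd: "\<And>u. u \<in> carrier_vec n \<Longrightarrow> 0 \<le> u \<bullet> (A *\<^sub>v u)"
    and lm: "lambda_max (diag_inv A * A) \<le> \<eta>0" and eta: "\<eta> \<le> \<omega> * (2 - \<omega> * \<eta>0)"
    and \<nu>: "\<nu> \<in> carrier_vec n"
  shows "(vnorm A (Kmat \<omega> A *\<^sub>v \<nu>))\<^sup>2 \<le> (vnorm A \<nu>)\<^sup>2 - \<eta> * (vnorm (diag_inv A) (A *\<^sub>v \<nu>))\<^sup>2"
proof -
  have d0: "d \<noteq> 0" using d by simp
  have K: "Kmat \<omega> A = 1\<^sub>m n - (\<omega> / d) \<cdot>\<^sub>m A" by (rule Kmat_const_diagonal[OF A diag d0])
  have A\<nu>: "A *\<^sub>v \<nu> \<in> carrier_vec n" using A \<nu> by simp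
  have "(vnorm (diag_inv A) (A *\<^sub>v \<nu>))\<^sup>2 = (1 / d) * ((A *\<^sub>v \<nu>) \<bullet> (A *\<^sub>v \<nu>))"
    unfolding diag_inv_const_diagonal[OF A diag d0] using d A\<nu> scalar_prod_self_nonneg[of "A *\<^sub>v \<nu>"]
    by (subst vnorm_sq) (auto simp: quadratic_form_smult[of _ n])
  moreover have "1\<^sub>m n - (\<omega> / d) \<cdot>\<^sub>m A \<in> carrier_mat n n" using A by auto
  then have "Kmat \<omega> A *\<^sub>v \<nu> \<in> carrier_vec n" unfolding K using \<nu> by simp
  then have "(vnorm A (Kmat \<omega> A *\<^sub>v \<nu>))\<^sup>2 = (Kmat \<omega> A *\<^sub>v \<nu>) \<bullet> (A *\<^sub>v (Kmat \<omega> A *\<^sub>v \<nu>))"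
    by (intro vnorm_sq psd)
  moreover have "(vnorm A \<nu>)\<^sup>2 = \<nu> \<bullet> (A *\<^sub>v \<nu>)" using psd[OF \<nu>] by (rule vnorm_sq)
  ultimately show ?thesis
    using jacobi_smoothing[OF A sym d const_diagonal_spectral_bound(1)[OF A sym diag d lm] eta \<nu>]
    unfolding K by simp
qed

lemma Kmat_two_grid_opnorm:
  fixes A R :: "real mat"
  assumes A: "A \<in> carrier_mat n n" and sym: "transpose_mat A = A"
    and diag: "\<forall>i<n. A $$ (i,i) = d" and d: "d > 0" and n: "n > 0"
    and pd: "\<And>u. u \<in> carrier_vec n \<Longrightarrow> u \<noteq> 0\<^sub>v n \<Longrightarrow> 0 < u \<bullet> (A *\<^sub>v u)"
    and lm: "lambda_max (diag_inv A * A) \<le> \<eta>0"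
    and R: "R \<in> carrier_mat nc n" and P: "P = s \<cdot>\<^sub>m transpose_mat R"
    and coarse_det: "det (R * A * P) \<noteq> 0"
    and approx: "\<And>e. e \<in> carrier_vec n \<Longrightarrow>
      \<exists>c\<in>carrier_vec nc. d * ((e - P *\<^sub>v c) \<bullet> (e - P *\<^sub>v c)) \<le> C * (e \<bullet> (A *\<^sub>v e))"
    and eta: "\<eta> \<le> \<omega> * (2 - \<omega> * \<eta>0)" and eta_pos: "0 \<le> \<eta>" and eta_C: "\<eta> \<le> C" and C: "C > 0"
  shows "opnorm A n (Kmat \<omega> A * (1\<^sub>m n - P * minv (R * A * P) * R * A)) \<le> sqrt (1 - \<eta> / C)"
proof (rule opnorm_le_sqrt[OF n pd])
  show "0 \<le> 1 - \<eta> / C" using eta_C C by (simp add: field_simps)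
next
  have RAP: "R * A * P \<in> carrier_mat nc nc" using R A P by auto
  note inv = the_mat_inverse[OF RAP coarse_det, folded minv_def]
  have psd: "0 \<le> u \<bullet> (A *\<^sub>v u)" if "u \<in> carrier_vec n" for u
    using pd[OF that] A that by (cases "u = 0\<^sub>v n") auto
  fix v :: "real vec" assume "v \<in> carrier_vec n"
  from two_grid_energy_contraction[OF A sym d const_diagonal_spectral_bound(1)[OF A sym diag d lm]
      psd R P inv(3) _ approx eta eta_pos eta_C C this] inv(1)
  show "((Kmat \<omega> A * (1\<^sub>m n - P * minv (R * A * P) * R * A)) *\<^sub>v v) \<bullet>
      (A *\<^sub>v ((Kmat \<omega> A * (1\<^sub>m n - P * minv (R * A * P) * R * A)) *\<^sub>v v)) \<le> (1 - \<eta> / C) * (v \<bullet> (A *\<^sub>v v))"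
    using Kmat_const_diagonal[OF A diag] d by simp
qed

section \<open>The model matrix and its Galerkin coarsening\<close>

definition B_entry :: "real \<Rightarrow> nat \<Rightarrow> nat \<Rightarrow> real" where
  "B_entry N i j = (if i = j then 2 * N / 3 - 1 else if i = j + 1 \<or> j = i + 1 then N / 6 - 1 else -1)"

definition B_diag :: "nat \<Rightarrow> real" where
  "B_diag k = 2 * 2 ^ k / 3 - 1"

lemma Suc_nlev: "Suc (nlev k) = 2 ^ k"
  unfolding nlev_def by simp

lemma nlev_eq_double_Suc: "k \<ge> 1 \<Longrightarrow> nlev k = 2 * nlev (k - 1) + 1"
proof (cases k)
  case (Suc j)
  have "(1::nat) \<le> 2 ^ j" by simp
  then show ?thesis unfolding nlev_def Suc power_Suc diff_Suc_1 by arith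
qed simp

lemma nlev_pos: "k \<ge> 1 \<Longrightarrow> nlev k > 0"
  using nlev_eq_double_Suc by fastforce

lemma Bmat_carrier: "Bmat k \<in> carrier_mat (nlev k) (nlev k)"
  unfolding Bmat_def nlev_def Let_def by simp

lemma index_Bmat: "i < nlev k \<Longrightarrow> j < nlev k \<Longrightarrow> Bmat k $$ (i,j) = B_entry (2 ^ k) i j"
  unfolding Bmat_def nlev_def Let_def B_entry_def by simp

lemma transpose_Bmat: "transpose_mat (Bmat k) = Bmat k"
  using Bmat_carrier[of k] by (intro eq_matI) (auto simp: index_Bmat B_entry_def)

lemma B_diag_pos: "k \<ge> 1 \<Longrightarrow> B_diag k > 0"
  unfolding B_diag_def using power_increasing[of 1 k "2::real"] by simp

lemma index_Bmat_diag: "i < nlev k \<Longrightarrow> Bmat k $$ (i,i) = B_diag k"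
  by (simp add: index_Bmat B_entry_def B_diag_def)

lemma restr_carrier: "restr k \<in> carrier_mat (nlev (k - 1)) (nlev k)"
  unfolding restr_def by simp

lemma prolong_carrier: "prolong k \<in> carrier_mat (nlev k) (nlev (k - 1))"
  unfolding prolong_def using restr_carrier by simp

lemma index_restr: "i < nlev (k - 1) \<Longrightarrow> t < nlev k \<Longrightarrow> restr k $$ (i,t) =
   (if t = 2 * i then 1/4 else if t = 2 * i + 1 then 1/2 else if t = 2 * i + 2 then 1/4 else 0)"
  unfolding restr_def by simp

lemma index_prolong: "t < nlev k \<Longrightarrow> i < nlev (k - 1) \<Longrightarrow> prolong k $$ (t,i) =
   (if t = 2 * i then 1/2 else if t = 2 * i + 1 then 1 else if t = 2 * i + 2 then 1/2 else 0)"
  unfolding prolong_def using restr_carrier[of k] by (simp add: index_restr)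

lemma sum_three_point_stencil:
  fixes g :: "nat \<Rightarrow> real"
  assumes "p + 2 < n"
  shows "(\<Sum>t<n. (if t = p then a else if t = p + 1 then b else if t = p + 2 then c else 0) * g t)
         = a * g p + b * g (p + 1) + c * g (p + 2)"
proof -
  have "(\<Sum>t<n. (if t = p then a else if t = p + 1 then b else if t = p + 2 then c else 0) * g t)
     = (\<Sum>t<n. (if t = p then a * g p else 0) + (if t = p + 1 then b * g (p + 1) else 0)
            + (if t = p + 2 then c * g (p + 2) else 0))"
    by (rule sum.cong) auto
  then show ?thesis using assms by (simp add: sum.distrib)
qed

lemma index_restr_mult:
  fixes M :: "real mat"
  assumes k: "k \<ge> 1" and M: "M \<in> carrier_mat (nlev k) nc" and i: "i < nlev (k - 1)" and j: "j < nc"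
  shows "(restr k * M) $$ (i,j) = M $$ (2*i, j) / 4 + M $$ (2*i+1, j) / 2 + M $$ (2*i+2, j) / 4"
proof -
  have "(restr k * M) $$ (i,j) = (\<Sum>t<nlev k. restr k $$ (i,t) * M $$ (t,j))"
    using M i j restr_carrier[of k] by (simp add: scalar_prod_def atLeast0LessThan)
  also have "\<dots> = (\<Sum>t<nlev k. (if t = 2 * i then 1/4 else if t = 2 * i + 1 then 1/2
        else if t = 2 * i + 2 then 1/4 else 0) * M $$ (t,j))"
    using i by (intro sum.cong) (auto simp: index_restr)
  also have "\<dots> = M $$ (2*i, j) / 4 + M $$ (2*i+1, j) / 2 + M $$ (2*i+2, j) / 4"
    using nlev_eq_double_Suc[OF k] i by (subst sum_three_point_stencil) auto
  finally show ?thesis .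
qed

lemma index_mult_prolong:
  fixes M :: "real mat"
  assumes k: "k \<ge> 1" and M: "M \<in> carrier_mat nr (nlev k)" and i: "i < nr" and j: "j < nlev (k - 1)"
  shows "(M * prolong k) $$ (i,j) = M $$ (i, 2*j) / 2 + M $$ (i, 2*j+1) + M $$ (i, 2*j+2) / 2"
proof -
  have "(M * prolong k) $$ (i,j) = (\<Sum>t<nlev k. prolong k $$ (t,j) * M $$ (i,t))"
    using M i j prolong_carrier[of k] by (simp add: scalar_prod_def mult.commute atLeast0LessThan)
  also have "\<dots> = (\<Sum>t<nlev k. (if t = 2 * j then 1/2 else if t = 2 * j + 1 then 1
        else if t = 2 * j + 2 then 1/2 else 0) * M $$ (i,t))"
    using j by (intro sum.cong) (auto simp: index_prolong)
  also have "\<dots> = M $$ (i, 2*j) / 2 + M $$ (i, 2*j+1) + M $$ (i, 2*j+2) / 2"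
    using nlev_eq_double_Suc[OF k] j by (subst sum_three_point_stencil) auto
  finally show ?thesis .
qed

lemma B_entry_galerkin:
  "(B_entry (2*N) (2*i) (2*j) / 4 + B_entry (2*N) (2*i+1) (2*j) / 2 + B_entry (2*N) (2*i+2) (2*j) / 4) / 2
   + (B_entry (2*N) (2*i) (2*j+1) / 4 + B_entry (2*N) (2*i+1) (2*j+1) / 2
      + B_entry (2*N) (2*i+2) (2*j+1) / 4)
   + (B_entry (2*N) (2*i) (2*j+2) / 4 + B_entry (2*N) (2*i+1) (2*j+2) / 2
      + B_entry (2*N) (2*i+2) (2*j+2) / 4) / 2
   = 2 * B_entry N i j"
proof -
  consider "i = j" | "i = j + 1" | "j = i + 1" | "i \<noteq> j \<and> i \<noteq> j + 1 \<and> j \<noteq> i + 1" by blast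
  then show ?thesis
  proof cases
    case 4
    then have "B_entry M (2*i+s) (2*j+t) = -1" if "s \<le> 2" "t \<le> 2" for M s t
      using that unfolding B_entry_def by auto
    from this[of 0 0] this[of 0 1] this[of 0 2] this[of 1 0] this[of 1 1] this[of 1 2]
      this[of 2 0] this[of 2 1] this[of 2 2] 4 show ?thesis
      by (simp add: B_entry_def)
  qed (simp_all add: B_entry_def field_simps)
qed

lemma restr_Bmat_prolong:
  assumes k: "k \<ge> 2"
  shows "restr k * Bmat k * prolong k = 2 \<cdot>\<^sub>m Bmat (k - 1)"
proof (rule eq_matI)
  have k1: "k \<ge> 1" using k by simp
  have RB: "restr k * Bmat k \<in> carrier_mat (nlev (k - 1)) (nlev k)"
    using restr_carrier[of k] Bmat_carrier[of k] by simp
  show "dim_row (restr k * Bmat k * prolong k) = dim_row (2 \<cdot>\<^sub>m Bmat (k - 1))"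
    "dim_col (restr k * Bmat k * prolong k) = dim_col (2 \<cdot>\<^sub>m Bmat (k - 1))"
    using RB prolong_carrier[of k] Bmat_carrier[of "k - 1"] by auto
  fix i j assume "i < dim_row (2 \<cdot>\<^sub>m Bmat (k - 1))" "j < dim_col (2 \<cdot>\<^sub>m Bmat (k - 1))"
  then have i: "i < nlev (k - 1)" and j: "j < nlev (k - 1)" using Bmat_carrier[of "k - 1"] by auto
  have N: "(2::real) ^ k = 2 * 2 ^ (k - 1)" using k1 by (cases k) auto
  have RB_index: "(restr k * Bmat k) $$ (i,t) = B_entry (2^k) (2*i) t / 4
      + B_entry (2^k) (2*i+1) t / 2 + B_entry (2^k) (2*i+2) t / 4" if "t < nlev k" for t
    using index_restr_mult[OF k1 Bmat_carrier i that] nlev_eq_double_Suc[OF k1] i that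
    by (simp add: index_Bmat)
  have "(restr k * Bmat k * prolong k) $$ (i,j) = (restr k * Bmat k) $$ (i, 2*j) / 2
      + (restr k * Bmat k) $$ (i, 2*j+1) + (restr k * Bmat k) $$ (i, 2*j+2) / 2"
    by (rule index_mult_prolong[OF k1 RB i j])
  also have "\<dots> = 2 * B_entry (2^(k - 1)) i j"
  proof -
    have "2*j + 2 < nlev k" using nlev_eq_double_Suc[OF k1] j by simp
    then show ?thesis using RB_index[of "2*j"] RB_index[of "2*j+1"] RB_index[of "2*j+2"]
      B_entry_galerkin[of "2^(k - 1)" i j] unfolding N by simp
  qed
  finally show "(restr k * Bmat k * prolong k) $$ (i,j) = (2 \<cdot>\<^sub>m Bmat (k - 1)) $$ (i,j)"
    using i j Bmat_carrier[of "k - 1"] by (simp add: index_Bmat)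
qed

lemma Agal_eq_smult_Bmat:
  "d < q \<Longrightarrow> Agal q b d = ((b / 2^q)^2 * 2^d) \<cdot>\<^sub>m Bmat (q - d)"
proof (induction d)
  case (Suc d)
  then have k: "q - d \<ge> 2" by simp
  let ?c = "(b / 2^q)^2 * 2^d"
  have "Agal q b (Suc d) = restr (q - d) * (?c \<cdot>\<^sub>m Bmat (q - d)) * prolong (q - d)"
    using Suc by simp
  also have "\<dots> = ?c \<cdot>\<^sub>m (restr (q - d) * Bmat (q - d) * prolong (q - d))"
    using restr_carrier[of "q - d"] Bmat_carrier[of "q - d"] prolong_carrier[of "q - d"]
    by (simp add: mult_smult_distrib[of _ "nlev (q - d - 1)" "nlev (q - d)" _ "nlev (q - d)"]
        mult_smult_assoc_mat[of _ "nlev (q - d - 1)" "nlev (q - d)" _ "nlev (q - d - 1)"])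
  also have "\<dots> = ((b / 2^q)^2 * 2^(Suc d)) \<cdot>\<^sub>m Bmat (q - Suc d)"
    unfolding restr_Bmat_prolong[OF k] smult_smult_mat by (simp add: ac_simps)
  finally show ?case .
qed simp

lemma Alev_eq_smult_Bmat:
  "1 \<le> k \<Longrightarrow> k \<le> q \<Longrightarrow> Alev q b k = ((b / 2^q)^2 * 2^(q - k)) \<cdot>\<^sub>m Bmat k"
  unfolding Alev_def using Agal_eq_smult_Bmat[of "q - k" q b] by simp

lemma Alev_coarse:
  "1 \<le> k \<Longrightarrow> k \<le> q \<Longrightarrow> Alev q b (k - 1) = restr k * Alev q b k * prolong k"
  unfolding Alev_def by (simp add: Suc_diff_le)

section \<open>The quadratic form of the model matrix\<close>

text \<open>\<open>pl_sq_integral x N\<close> is \<open>\<integral>\<^sub>0\<^sup>N u\<^sup>2\<close> for the piecewise linear \<open>u\<close> with \<open>u t = x t\<close>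
  at the integer nodes; \<open>padded n e\<close> lists the nodal values \<open>0, e\<^sub>0, \<dots>, e\<^sub>n\<^sub>-\<^sub>1, 0\<close>
  of a grid vector under the zero exterior condition.\<close>

definition pl_sq_integral :: "(nat \<Rightarrow> real) \<Rightarrow> nat \<Rightarrow> real" where
  "pl_sq_integral x N = (\<Sum>t<N. ((x t)^2 + x t * x (Suc t) + (x (Suc t))^2) / 3)"

definition padded :: "nat \<Rightarrow> real vec \<Rightarrow> nat \<Rightarrow> real" where
  "padded n e t = (if 0 < t \<and> t \<le> n then e $ (t - 1) else 0)"

lemma sum_lessThan_double_pairs:
  fixes g :: "nat \<Rightarrow> real"
  shows "(\<Sum>t<2*m. g t) = (\<Sum>j<m. g (2*j) + g (2*j+1))"
  by (induction m) (simp_all add: algebra_simps)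

lemma sum_lessThan_shift_zero_ends:
  fixes x :: "nat \<Rightarrow> real"
  assumes "x 0 = 0" "x N = 0"
  shows "(\<Sum>t<N. x (Suc t)) = (\<Sum>t<N. x t)"
  using sum.lessThan_Suc_shift[of x N] assms by simp

lemma pl_sq_integral_term_eq:
  fixes a b :: real
  shows "a^2 + a*b + b^2 = (a + b/2)^2 + 3 * b^2 / 4"
  by (simp add: power2_eq_square field_simps)

lemma pl_sq_integral_term_nonneg: "0 \<le> (a :: real)^2 + a*b + b^2"
  unfolding pl_sq_integral_term_eq by simp

lemma pl_sq_integral_term_eq_0:
  assumes "(a :: real)^2 + a*b + b^2 = 0"
  shows "a = 0"
proof -
  have "(a + b/2)^2 = 0" "b^2 = 0"
    using assms zero_le_power2[of "a + b/2"] zero_le_power2[of b] unfolding pl_sq_integral_term_eq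
    by linarith+
  then show ?thesis by simp
qed

text \<open>The \<open>-1\<close> entries of \<open>B\<close> contribute \<open>-(\<Sum>x)\<^sup>2\<close>; this is absorbed by subtracting the mean.\<close>

lemma pl_sq_integral_centered:
  fixes x :: "nat \<Rightarrow> real"
  assumes x0: "x 0 = 0" and xN: "x N = 0" and N: "N > 0"
  shows "real N * pl_sq_integral (\<lambda>t. x t - (\<Sum>t<N. x t) / N) N
    = real N * pl_sq_integral x N - (\<Sum>t<N. x t)^2"
proof -
  define s u where "s = (\<Sum>t<N. x t)" and "u = s / N"
  have shifted: "((x t - u)^2 + (x t - u) * (x (Suc t) - u) + (x (Suc t) - u)^2) / 3
      = ((x t)^2 + x t * x (Suc t) + (x (Suc t))^2) / 3 - u * x t - u * x (Suc t) + u^2" for t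
    by (simp add: power2_eq_square field_simps)
  have "pl_sq_integral (\<lambda>t. x t - u) N
      = pl_sq_integral x N - u * s - u * (\<Sum>t<N. x (Suc t)) + N * u^2"
    unfolding pl_sq_integral_def shifted s_def by (simp add: sum.distrib sum_subtractf sum_distrib_left)
  then have "pl_sq_integral (\<lambda>t. x t - u) N = pl_sq_integral x N - 2 * u * s + N * u^2"
    unfolding sum_lessThan_shift_zero_ends[OF x0 xN] s_def by simp
  then show ?thesis unfolding u_def s_def using N by (simp add: power2_eq_square field_simps)
qed

lemma pl_sq_integral_ge_second_differences:
  fixes w :: "nat \<Rightarrow> real"
  shows "(\<Sum>j<m. (w (2*j+1) - (w (2*j) + w (2*j+2)) / 2)^2) / 6 \<le> pl_sq_integral w (2*m)"
proof -
  have pair: "(b - (a + c)/2)^2 / 6 \<le> (a^2 + a*b + b^2)/3 + (b^2 + b*c + c^2)/3" for a b c :: real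
  proof -
    have "(a^2 + a*b + b^2)/3 + (b^2 + b*c + c^2)/3 - (b - (a + c)/2)^2 / 6
        = (3 * (b + (a + c)/2)^2 + (a - c)^2) / 6"
      by (simp add: power2_eq_square field_simps)
    moreover have "0 \<le> (3 * (b + (a + c)/2)^2 + (a - c)^2) / 6" by simp
    ultimately show ?thesis by linarith
  qed
  have "(\<Sum>j<m. (w (2*j+1) - (w (2*j) + w (2*j+2)) / 2)^2) / 6
      \<le> (\<Sum>j<m. ((w (2*j))^2 + w (2*j) * w (2*j+1) + (w (2*j+1))^2) / 3
          + ((w (2*j+1))^2 + w (2*j+1) * w (2*j+2) + (w (2*j+2))^2) / 3)"
    unfolding sum_divide_distrib by (intro sum_mono pair)
  also have "\<dots> = pl_sq_integral w (2*m)"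
    unfolding pl_sq_integral_def sum_lessThan_double_pairs by (simp add: numeral_2_eq_2)
  finally show ?thesis .
qed

lemma pl_sq_integral_centered_ge:
  fixes x :: "nat \<Rightarrow> real"
  assumes x0: "x 0 = 0" and xN: "x (2*m) = 0" and m: "m \<ge> 1"
  shows "(real (2*m) / 6) * (\<Sum>j<m. (x (2*j+1) - (x (2*j) + x (2*j+2)) / 2)^2)
           \<le> real (2*m) * pl_sq_integral x (2*m) - (\<Sum>t<2*m. x t)^2"
proof -
  define u where "u = (\<Sum>t<2*m. x t) / real (2*m)"
  have "(\<Sum>j<m. (x (2*j+1) - (x (2*j) + x (2*j+2)) / 2)^2) / 6
      = (\<Sum>j<m. ((x (2*j+1) - u) - ((x (2*j) - u) + (x (2*j+2) - u)) / 2)^2) / 6"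
    by (simp add: field_simps)
  also have "\<dots> \<le> pl_sq_integral (\<lambda>t. x t - u) (2*m)"
    by (rule pl_sq_integral_ge_second_differences)
  finally have "real (2*m) * ((\<Sum>j<m. (x (2*j+1) - (x (2*j) + x (2*j+2)) / 2)^2) / 6)
      \<le> real (2*m) * pl_sq_integral (\<lambda>t. x t - u) (2*m)"
    by (intro mult_left_mono) auto
  also have "\<dots> = real (2*m) * pl_sq_integral x (2*m) - (\<Sum>t<2*m. x t)^2"
    unfolding u_def by (rule pl_sq_integral_centered) (use x0 xN m in auto)
  finally show ?thesis by simp
qed

lemma pl_sq_integral_centered_eq_0:
  fixes x :: "nat \<Rightarrow> real"
  assumes x0: "x 0 = 0" and xN: "x N = 0" and N: "N > 0"
    and zero: "real N * pl_sq_integral x N - (\<Sum>t<N. x t)^2 = 0" and t: "t < N"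
  shows "x t = 0"
proof -
  define u where "u = (\<Sum>t<N. x t) / real N"
  have "real N * pl_sq_integral (\<lambda>t. x t - u) N = 0"
    unfolding u_def using pl_sq_integral_centered[OF x0 xN N] zero by simp
  then have "(\<Sum>t<N. ((x t - u)^2 + (x t - u) * (x (Suc t) - u) + (x (Suc t) - u)^2) / 3) = 0"
    using N unfolding pl_sq_integral_def by simp
  then have "(x t - u)^2 + (x t - u) * (x (Suc t) - u) + (x (Suc t) - u)^2 = 0" if "t < N" for t
    using that by (subst (asm) sum_nonneg_eq_0_iff) (auto intro: pl_sq_integral_term_nonneg)
  then have "x t - u = 0" if "t < N" for t using that pl_sq_integral_term_eq_0 by blast
  moreover from this[OF N] have "u = 0" using x0 by simp
  ultimately show ?thesis using t by simp
qed

lemma sum_if_Suc_eq: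
  fixes g :: "nat \<Rightarrow> real"
  shows "(\<Sum>b<n. if b + 1 = a then g b else 0) = (if 0 < a \<and> a \<le> n then g (a - 1) else 0)"
proof (cases "a = 0")
  case False
  then have "(\<Sum>b<n. if b + 1 = a then g b else 0) = (\<Sum>b<n. if b = a - 1 then g b else 0)"
    by (intro sum.cong) auto
  then show ?thesis using False by auto
qed simp

lemma padded_index: "a < n \<Longrightarrow> padded n e (a + 1) = e $ a"
  unfolding padded_def by simp

lemma Bmat_mult_vec_index:
  assumes e: "e \<in> carrier_vec (nlev k)" and a: "a < nlev k"
  shows "(Bmat k *\<^sub>v e) $ a = (2 * 2^k / 3) * padded (nlev k) e (a + 1)
      + (2^k / 6) * (padded (nlev k) e a + padded (nlev k) e (a + 2)) - (\<Sum>b<nlev k. e $ b)"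
proof -
  let ?n = "nlev k" and ?N = "(2::real) ^ k"
  have "(Bmat k *\<^sub>v e) $ a = (\<Sum>b<?n. Bmat k $$ (a,b) * e $ b)"
    using e a Bmat_carrier[of k] by (simp add: scalar_prod_def atLeast0LessThan)
  also have "\<dots> = (\<Sum>b<?n. - e $ b + (if b = a then (2 * ?N / 3) * e $ b else 0)
      + (if b + 1 = a then (?N/6) * e $ b else 0) + (if b = a + 1 then (?N/6) * e $ b else 0))"
    using a by (intro sum.cong) (auto simp: index_Bmat B_entry_def algebra_simps)
  also have "\<dots> = - (\<Sum>b<?n. e $ b) + (2 * ?N / 3) * e $ a
      + (if 0 < a \<and> a \<le> ?n then (?N/6) * e $ (a - 1) else 0)
      + (if a + 1 < ?n then (?N/6) * e $ (a + 1) else 0)"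
    using a by (simp only: sum.distrib sum_negf sum_if_Suc_eq) simp
  also have "\<dots> = (2 * ?N / 3) * padded ?n e (a + 1)
      + (?N / 6) * (padded ?n e a + padded ?n e (a + 2)) - (\<Sum>b<?n. e $ b)"
    using a by (auto simp: padded_def algebra_simps)
  finally show ?thesis .
qed

lemma quadratic_form_Bmat:
  assumes e: "e \<in> carrier_vec (nlev k)"
  shows "e \<bullet> (Bmat k *\<^sub>v e) = 2^k * pl_sq_integral (padded (nlev k) e) (2^k)
           - (\<Sum>t<2^k. padded (nlev k) e t)^2"
proof -
  let ?n = "nlev k" and ?N = "(2::real) ^ k"
  define X where "X = padded ?n e"
  have X0: "X 0 = 0" and Xn: "X (Suc ?n) = 0" unfolding X_def padded_def by auto
  have Xa: "e $ a = X (a + 1)" if "a < ?n" for a using that unfolding X_def padded_def by auto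
  define s where "s = (\<Sum>a<?n. X (a + 1))"
  have s_e: "(\<Sum>b<?n. e $ b) = s" unfolding s_def using Xa by (intro sum.cong) auto
  have s_X: "(\<Sum>t<Suc ?n. X t) = s" unfolding s_def sum.lessThan_Suc_shift using X0 by simp
  have "e \<bullet> (Bmat k *\<^sub>v e) = (\<Sum>a<?n. e $ a * (Bmat k *\<^sub>v e) $ a)"
    using e Bmat_carrier[of k] by (simp add: scalar_prod_def atLeast0LessThan)
  also have "\<dots> = (\<Sum>a<?n. X (a + 1) * ((2 * ?N / 3) * X (a + 1) + (?N / 6) * (X a + X (a + 2)) - s))"
    using Xa Bmat_mult_vec_index[OF e] s_e unfolding X_def[symmetric] by (intro sum.cong) auto
  also have "\<dots> = (\<Sum>a<?n. (2 * ?N / 3) * X (a + 1)^2 + (?N/6) * (X a * X (a + 1))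
      + (?N/6) * (X (a + 1) * X (a + 2)) - s * X (a + 1))"
    by (intro sum.cong) (simp_all add: power2_eq_square algebra_simps)
  also have "\<dots> = (2 * ?N / 3) * (\<Sum>a<?n. X (a + 1)^2) + (?N/6) * (\<Sum>a<?n. X a * X (a + 1))
      + (?N/6) * (\<Sum>a<?n. X (a + 1) * X (a + 2)) - s * s"
    unfolding s_def by (simp only: sum.distrib sum_subtractf sum_distrib_left)
  finally have quad: "e \<bullet> (Bmat k *\<^sub>v e) = \<dots>" .
  have sq1: "(\<Sum>t<Suc ?n. (X t)^2) = (\<Sum>a<?n. X (a + 1)^2)"
    unfolding sum.lessThan_Suc_shift using X0 by simp
  have sq2: "(\<Sum>t<Suc ?n. (X (Suc t))^2) = (\<Sum>a<?n. X (a + 1)^2)" using Xn by simp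
  have cross1: "(\<Sum>t<Suc ?n. X t * X (Suc t)) = (\<Sum>a<?n. X a * X (a + 1))" using Xn by simp
  have cross2: "(\<Sum>t<Suc ?n. X t * X (Suc t)) = (\<Sum>a<?n. X (a + 1) * X (a + 2))"
    unfolding sum.lessThan_Suc_shift using X0 by simp
  have cross: "(\<Sum>a<?n. X a * X (a + 1)) = (\<Sum>a<?n. X (a + 1) * X (a + 2))"
    using cross1 cross2 by linarith
  have integral: "pl_sq_integral X (Suc ?n) = ((\<Sum>t<Suc ?n. (X t)^2) + (\<Sum>t<Suc ?n. X t * X (Suc t))
      + (\<Sum>t<Suc ?n. (X (Suc t))^2)) / 3"
    unfolding pl_sq_integral_def by (simp only: sum_divide_distrib[symmetric] sum.distrib)
  show ?thesis
    unfolding Suc_nlev[symmetric] X_def[symmetric] s_X quad integral sq1 sq2 cross1 cross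
    by (simp add: power2_eq_square algebra_simps)
qed

lemma quadratic_form_Bmat_ge:
  assumes k: "k \<ge> 1" and e: "e \<in> carrier_vec (nlev k)"
  shows "(2^k / 6) * (\<Sum>j<2^(k - 1). (padded (nlev k) e (2*j+1)
      - (padded (nlev k) e (2*j) + padded (nlev k) e (2*j+2)) / 2)^2) \<le> e \<bullet> (Bmat k *\<^sub>v e)"
proof -
  define m :: nat where "m = 2^(k - 1)"
  have two_m: "2^k = 2 * m" unfolding m_def using k by (cases k) auto
  have "2*m = Suc (nlev k)" using Suc_nlev[of k] two_m by simp
  then have "padded (nlev k) e 0 = 0" "padded (nlev k) e (2*m) = 0" "m \<ge> 1"
    unfolding padded_def by auto
  have "(2::real)^k = real (2*m)" unfolding two_m[symmetric] by simp
  with pl_sq_integral_centered_ge[OF \<open>padded (nlev k) e 0 = 0\<close> \<open>padded (nlev k) e (2*m) = 0\<close> \<open>m \<ge> 1\<close>]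
  show ?thesis unfolding quadratic_form_Bmat[OF e] m_def[symmetric] two_m by simp
qed

lemma Bmat_pos_def:
  assumes k: "k \<ge> 1" and e: "e \<in> carrier_vec (nlev k)"
  shows "0 \<le> e \<bullet> (Bmat k *\<^sub>v e)" and "e \<noteq> 0\<^sub>v (nlev k) \<Longrightarrow> 0 < e \<bullet> (Bmat k *\<^sub>v e)"
proof -
  show psd: "0 \<le> e \<bullet> (Bmat k *\<^sub>v e)"
    by (rule order.trans[OF _ quadratic_form_Bmat_ge[OF k e]]) (auto intro!: sum_nonneg mult_nonneg_nonneg)
  assume nz: "e \<noteq> 0\<^sub>v (nlev k)"
  show "0 < e \<bullet> (Bmat k *\<^sub>v e)"
  proof (rule ccontr)
    assume "\<not> 0 < e \<bullet> (Bmat k *\<^sub>v e)"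
    with psd have "real (Suc (nlev k)) * pl_sq_integral (padded (nlev k) e) (Suc (nlev k))
        - (\<Sum>t<Suc (nlev k). padded (nlev k) e t)^2 = 0"
      unfolding quadratic_form_Bmat[OF e] Suc_nlev by simp
    note zero = this
    have "padded (nlev k) e (a + 1) = 0" if "a < nlev k" for a
      by (rule pl_sq_integral_centered_eq_0[OF _ _ _ zero]) (use that in \<open>auto simp: padded_def\<close>)
    then have "e = 0\<^sub>v (nlev k)" using e padded_index by (intro eq_vecI) auto
    with nz show False ..
  qed
qed

lemma prolong_mult_odd_entries:
  assumes k: "k \<ge> 1" and e: "e \<in> carrier_vec (nlev k)" and a: "a < nlev k"
  shows "(prolong k *\<^sub>v vec (nlev (k - 1)) (\<lambda>i. e $ (2*i+1))) $ a
       = (if odd a then e $ a else (padded (nlev k) e a + padded (nlev k) e (a + 2)) / 2)"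
proof -
  let ?nc = "nlev (k - 1)"
  have n: "nlev k = 2 * ?nc + 1" by (rule nlev_eq_double_Suc[OF k])
  have "(prolong k *\<^sub>v vec ?nc (\<lambda>i. e $ (2*i+1))) $ a
      = (\<Sum>i<?nc. (if a = 2 * i then 1/2 else if a = 2 * i + 1 then 1
        else if a = 2 * i + 2 then 1/2 else 0) * e $ (2*i+1))"
    using a prolong_carrier[of k] by (simp add: scalar_prod_def index_prolong atLeast0LessThan)
  also have "\<dots> = (if odd a then e $ a else (padded (nlev k) e a + padded (nlev k) e (a + 2)) / 2)"
  proof (cases "odd a")
    case True
    then obtain j where j: "a = 2*j+1" by (metis oddE)
    have "(\<Sum>i<?nc. (if a = 2 * i then 1/2 else if a = 2 * i + 1 then 1
        else if a = 2 * i + 2 then 1/2 else 0) * e $ (2*i+1)) = (\<Sum>i<?nc. if i = j then e $ (2*i+1) else 0)"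
      unfolding j by (intro sum.cong) auto
    then show ?thesis using True a n j by simp
  next
    case False
    then obtain j where j: "a = 2*j" by (metis evenE)
    have "(\<Sum>i<?nc. (if a = 2 * i then 1/2 else if a = 2 * i + 1 then 1
        else if a = 2 * i + 2 then 1/2 else 0) * e $ (2*i+1))
      = (\<Sum>i<?nc. (if i = j then e $ (2*i+1) / 2 else 0) + (if i + 1 = j then e $ (2*i+1) / 2 else 0))"
      unfolding j by (intro sum.cong) auto
    also have "\<dots> = (if j < ?nc then e $ (2*j+1) / 2 else 0)
        + (if 0 < j \<and> j \<le> ?nc then e $ (2*(j - 1)+1) / 2 else 0)"
      by (simp only: sum.distrib sum_if_Suc_eq[where g = "\<lambda>i. e $ (2*i+1) / 2"]) simp
    also have "\<dots> = (padded (nlev k) e a + padded (nlev k) e (a + 2)) / 2"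
      unfolding padded_def j using a n j by (auto simp: algebra_simps intro!: arg_cong[where f = "($) e"])
    finally show ?thesis using False by simp
  qed
  finally show ?thesis .
qed

text \<open>Approximation property: interpolating \<open>e\<close> from its odd-indexed (coarse-node) values
  leaves exactly the second differences that \<open>quadratic_form_Bmat_ge\<close> controls.\<close>

lemma Bmat_approximation:
  assumes k: "k \<ge> 1" and e: "e \<in> carrier_vec (nlev k)"
  shows "\<exists>c\<in>carrier_vec (nlev (k - 1)).
    B_diag k * ((e - prolong k *\<^sub>v c) \<bullet> (e - prolong k *\<^sub>v c)) \<le> 4 * (e \<bullet> (Bmat k *\<^sub>v e))"
  unfolding B_diag_def
proof
  let ?n = "nlev k" and ?nc = "nlev (k - 1)" and ?X = "padded (nlev k) e"
  define c where "c = vec ?nc (\<lambda>i. e $ (2*i+1))"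
  show "c \<in> carrier_vec ?nc" unfolding c_def by simp
  then have Pc: "prolong k *\<^sub>v c \<in> carrier_vec ?n" using prolong_carrier[of k] by simp
  define h where "h a = (if even a then (?X (a + 1) - (?X a + ?X (a + 2)) / 2)^2 else 0)" for a
  have residual: "(e - prolong k *\<^sub>v c) $ a = (if even a then ?X (a + 1) - (?X a + ?X (a + 2)) / 2 else 0)"
    if a: "a < ?n" for a
    using prolong_mult_odd_entries[OF k e a] padded_index[OF a] a prolong_carrier[of k]
    unfolding c_def by auto
  have "(e - prolong k *\<^sub>v c) \<bullet> (e - prolong k *\<^sub>v c) = (\<Sum>a<?n. ((e - prolong k *\<^sub>v c) $ a)^2)"
    by (rule scalar_prod_self_eq_sum_squares) (use e Pc in simp)
  also have "\<dots> = (\<Sum>a<?n. h a)" unfolding h_def using residual by (intro sum.cong) auto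
  also have "\<dots> = (\<Sum>a<2 * Suc ?nc. h a)" unfolding nlev_eq_double_Suc[OF k] h_def by simp
  also have "\<dots> = (\<Sum>j<Suc ?nc. (?X (2*j+1) - (?X (2*j) + ?X (2*j+2)) / 2)^2)"
    unfolding sum_lessThan_double_pairs h_def by (simp add: algebra_simps)
  also have "Suc ?nc = 2^(k - 1)" using Suc_nlev[of "k - 1"] .
  finally have "(2^k / 6) * ((e - prolong k *\<^sub>v c) \<bullet> (e - prolong k *\<^sub>v c)) \<le> e \<bullet> (Bmat k *\<^sub>v e)"
    using quadratic_form_Bmat_ge[OF k e] by simp
  moreover have "(2 * 2^k / 3 - 1) * ((e - prolong k *\<^sub>v c) \<bullet> (e - prolong k *\<^sub>v c))
      \<le> 4 * ((2^k / 6) * ((e - prolong k *\<^sub>v c) \<bullet> (e - prolong k *\<^sub>v c)))"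
    using scalar_prod_self_nonneg[of "e - prolong k *\<^sub>v c"] by (simp add: algebra_simps)
  ultimately show "(2 * 2^k / 3 - 1) * ((e - prolong k *\<^sub>v c) \<bullet> (e - prolong k *\<^sub>v c))
      \<le> 4 * (e \<bullet> (Bmat k *\<^sub>v e))" by linarith
qed

section \<open>Convergence on the multigrid hierarchy\<close>

lemma smult_Bmat_spd:
  assumes k: "k \<ge> 1" and \<alpha>: "\<alpha> > 0"
  shows "\<alpha> \<cdot>\<^sub>m Bmat k \<in> carrier_mat (nlev k) (nlev k)"
    and "transpose_mat (\<alpha> \<cdot>\<^sub>m Bmat k) = \<alpha> \<cdot>\<^sub>m Bmat k"
    and "\<forall>i<nlev k. (\<alpha> \<cdot>\<^sub>m Bmat k) $$ (i,i) = \<alpha> * B_diag k"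
    and "\<alpha> * B_diag k > 0"
    and "\<And>u. u \<in> carrier_vec (nlev k) \<Longrightarrow> u \<noteq> 0\<^sub>v (nlev k) \<Longrightarrow> 0 < u \<bullet> ((\<alpha> \<cdot>\<^sub>m Bmat k) *\<^sub>v u)"
  using Bmat_carrier[of k] transpose_Bmat[of k] B_diag_pos[OF k] \<alpha> Bmat_pos_def(2)[OF k]
  by (auto simp: transpose_smult_mat index_Bmat_diag quadratic_form_smult[OF Bmat_carrier])

lemma Alev_spd:
  assumes k: "1 \<le> k" "k \<le> q" and b: "b > 0"
  obtains d where "Alev q b k \<in> carrier_mat (nlev k) (nlev k)"
    "transpose_mat (Alev q b k) = Alev q b k"
    "\<forall>i<nlev k. Alev q b k $$ (i,i) = d" "d > 0"
    "\<And>u. u \<in> carrier_vec (nlev k) \<Longrightarrow> u \<noteq> 0\<^sub>v (nlev k) \<Longrightarrow> 0 < u \<bullet> (Alev q b k *\<^sub>v u)"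
proof -
  have "(b / 2^q)^2 * 2^(q - k) > (0::real)" using b by simp
  from smult_Bmat_spd[OF k(1) this] show thesis by (rule that[unfolded Alev_eq_smult_Bmat[OF k]])
qed

lemma Alev_lambda_max_ge_1:
  assumes k: "1 \<le> k" "k \<le> q" and b: "b > 0"
    and lm: "lambda_max (diag_inv (Alev q b k) * Alev q b k) \<le> \<eta>0"
  shows "1 \<le> \<eta>0"
proof -
  obtain d where A: "Alev q b k \<in> carrier_mat (nlev k) (nlev k)"
    "transpose_mat (Alev q b k) = Alev q b k" "\<forall>i<nlev k. Alev q b k $$ (i,i) = d" "d > 0"
    by (rule Alev_spd[OF k b])
  show ?thesis by (rule const_diagonal_spectral_bound(2)[OF A lm nlev_pos[OF k(1)]])
qed

lemma Alev_smoothing: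
  assumes k: "1 \<le> k" "k \<le> q" and b: "b > 0"
    and lm: "lambda_max (diag_inv (Alev q b k) * Alev q b k) \<le> \<eta>0"
    and eta: "\<eta> \<le> \<omega> * (2 - \<omega> * \<eta>0)" and \<nu>: "\<nu> \<in> carrier_vec (nlev k)"
  shows "(vnorm (Alev q b k) (Kmat \<omega> (Alev q b k) *\<^sub>v \<nu>))\<^sup>2
    \<le> (vnorm (Alev q b k) \<nu>)\<^sup>2 - \<eta> * (vnorm (diag_inv (Alev q b k)) (Alev q b k *\<^sub>v \<nu>))\<^sup>2"
proof -
  obtain d where A: "Alev q b k \<in> carrier_mat (nlev k) (nlev k)"
    "transpose_mat (Alev q b k) = Alev q b k" "\<forall>i<nlev k. Alev q b k $$ (i,i) = d" "d > 0"
    and pd: "\<And>u. u \<in> carrier_vec (nlev k) \<Longrightarrow> u \<noteq> 0\<^sub>v (nlev k) \<Longrightarrow> 0 < u \<bullet> (Alev q b k *\<^sub>v u)"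
    using Alev_spd[OF k b] by blast
  have psd: "0 \<le> u \<bullet> (Alev q b k *\<^sub>v u)" if "u \<in> carrier_vec (nlev k)" for u
    using pd[OF that] A(1) that by (cases "u = 0\<^sub>v (nlev k)") auto
  show ?thesis by (rule Kmat_smoothing[OF A psd lm eta \<nu>])
qed

lemma Alev_two_grid_opnorm:
  assumes k: "2 \<le> k" "k \<le> q" and b: "b > 0"
    and lm: "lambda_max (diag_inv (Alev q b k) * Alev q b k) \<le> \<eta>0"
    and eta: "\<eta> \<le> \<omega> * (2 - \<omega> * \<eta>0)" and eta_pos: "0 \<le> \<eta>" and eta_4: "\<eta> \<le> 4"
  shows "opnorm (Alev q b k) (nlev k) (Kmat \<omega> (Alev q b k) * Tmat q b k) \<le> sqrt (1 - \<eta> / 4)"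
proof -
  have k1: "1 \<le> k" using k by simp
  define \<alpha> :: real where "\<alpha> = (b / 2^q)^2 * 2^(q - k)"
  have \<alpha>: "\<alpha> > 0" unfolding \<alpha>_def using b by simp
  have A: "Alev q b k = \<alpha> \<cdot>\<^sub>m Bmat k" unfolding \<alpha>_def using Alev_eq_smult_Bmat k1 k(2) .
  have coarse: "restr k * Alev q b k * prolong k = Alev q b (k - 1)"
    using Alev_coarse[OF k1 k(2)] by simp
  have "1 \<le> k - 1" "k - 1 \<le> q" using k by auto
  then obtain dc where "Alev q b (k - 1) \<in> carrier_mat (nlev (k - 1)) (nlev (k - 1))"
    "transpose_mat (Alev q b (k - 1)) = Alev q b (k - 1)" "\<forall>i<nlev (k - 1). Alev q b (k - 1) $$ (i,i) = dc"
    "dc > 0" and "\<And>u. u \<in> carrier_vec (nlev (k - 1)) \<Longrightarrow> u \<noteq> 0\<^sub>v (nlev (k - 1))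
      \<Longrightarrow> 0 < u \<bullet> (Alev q b (k - 1) *\<^sub>v u)"
    using Alev_spd b by blast
  then have coarse_det: "det (restr k * Alev q b k * prolong k) \<noteq> 0"
    unfolding coarse by (intro pos_def_det_nonzero)
  have approx: "\<exists>c\<in>carrier_vec (nlev (k - 1)). \<alpha> * B_diag k * ((e - prolong k *\<^sub>v c) \<bullet> (e - prolong k *\<^sub>v c))
      \<le> 4 * (e \<bullet> (Alev q b k *\<^sub>v e))" if e: "e \<in> carrier_vec (nlev k)" for e
  proof -
    obtain c where "c \<in> carrier_vec (nlev (k - 1))"
      and "B_diag k * ((e - prolong k *\<^sub>v c) \<bullet> (e - prolong k *\<^sub>v c)) \<le> 4 * (e \<bullet> (Bmat k *\<^sub>v e))"
      using Bmat_approximation[OF k1 e] by blast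
    with \<alpha> have "\<alpha> * (B_diag k * ((e - prolong k *\<^sub>v c) \<bullet> (e - prolong k *\<^sub>v c)))
        \<le> \<alpha> * (4 * (e \<bullet> (Bmat k *\<^sub>v e)))" by simp
    with \<open>c \<in> carrier_vec (nlev (k - 1))\<close> show ?thesis
      unfolding A quadratic_form_smult[OF Bmat_carrier e] by (auto simp: ac_simps)
  qed
  have "Tmat q b k = 1\<^sub>m (nlev k) - prolong k * minv (restr k * Alev q b k * prolong k) * restr k * Alev q b k"
    unfolding Tmat_def coarse ..
  with Kmat_two_grid_opnorm[OF smult_Bmat_spd(1-4)[OF k1 \<alpha>] nlev_pos[OF k1] smult_Bmat_spd(5)[OF k1 \<alpha>]
      lm[unfolded A] restr_carrier prolong_def coarse_det[unfolded A] approx[unfolded A]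
      eta eta_pos eta_4]
  show ?thesis unfolding A by simp
qed

theorem mainTheorem10:
  fixes q :: nat and b \<eta>0 \<omega> \<eta> :: real
  assumes "q \<ge> 2" and "b > 0"
    and "\<forall>k\<in>{1..q}. lambda_max (diag_inv (Alev q b k) * Alev q b k) \<le> \<eta>0"
    and "\<eta>0 < 3"
    and "0 < \<omega>" and "\<omega> < 2 / \<eta>0"
    and "0 < \<eta>" and "\<eta> \<le> \<omega> * (2 - \<omega> * \<eta>0)"
  shows "(\<forall>k\<in>{1..q}. \<forall>\<nu>\<in>carrier_vec (nlev k).
            (vnorm (Alev q b k) (Kmat \<omega> (Alev q b k) *\<^sub>v \<nu>))\<^sup>2
              \<le> (vnorm (Alev q b k) \<nu>)\<^sup>2
                 - \<eta> * (vnorm (diag_inv (Alev q b k)) (Alev q b k *\<^sub>v \<nu>))\<^sup>2)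
       \<and> (\<forall>k\<in>{2..q}.
            opnorm (Alev q b k) (nlev k) (Kmat \<omega> (Alev q b k) * Tmat q b k) \<le> sqrt (1 - \<eta> / 4)
            \<and> sqrt (1 - \<eta> / 4) < 1)"
proof -
  have "1 \<le> \<eta>0" using Alev_lambda_max_ge_1[of q q b \<eta>0] assms(1-3) by auto
  then have "\<eta> \<le> 1" using smoothing_constant_le_1 assms(5,8) by blast
  have two_grid: "opnorm (Alev q b k) (nlev k) (Kmat \<omega> (Alev q b k) * Tmat q b k) \<le> sqrt (1 - \<eta> / 4)"
    if "k \<in> {2..q}" for k
    using that Alev_two_grid_opnorm[of k q b \<eta>0 \<eta> \<omega>] assms(2,3,7,8) \<open>\<eta> \<le> 1\<close> by auto
  show ?thesis using Alev_smoothing two_grid assms(2,3,7,8) by auto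
qed

end
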